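(* Let $K$ be a field with $\operatorname{char}K=2$ and let $v_0,v_1,v_2$ be the pivot elements (context). Then: (i) the Lie subalgebra of $(\operatorname{End}\Lambda)^{(-)}$ generated by $v_0,v_1,v_2$ using the commutator only has as a basis the standard monomials of the first type; (ii) the Lie superalgebra $\mathbf Q$ generated by $v_0,v_1,v_2$ (closed also under the squaring map $a\mapsto a^2$ on odd elements), as well as the restricted Lie subalgebra of $(\operatorname{End}\Lambda)^{(-)}$ generated by $v_0,v_1,v_2$ (closed under commutators and $a\mapsto a^2$), has as a basis the standard monomials of the first type together with the elements $x_{n-2}v_n$, $n\ge 3$ (the squares of the pivot elements).
   Context: $\Lambda$ is the Grassmann algebra over $K$ on odd generators $x_0,x_1,\dots$; $x_i$ is identified with left multiplication by $x_i$; $\partial_i$ is the odd superderivation with $\partial_i(x_j)=\delta_{ij}$; pivot elements $v_i=\sum_{k\ge0}\big(\prod_{n=0}^{k-1}x_{i+3n}x_{i+3n+1}\big)\partial_{i+3k}$ ($i\ge0$), elements of $\operatorname{End}\Lambda$; $(\operatorname{End}\Lambda)^{(-)}$ carries the (super)commutator. A tail monomial is $r_m=x_0^{\xi_0}\cdots x_m^{\xi_m}$, $\xi_i\in\{0,1\}$ ($r_m=1$ if $m<0$). The standard monomials of the first type are all $r_{n-3}v_n$, $n\ge0$, except $x_0x_1^{\xi_1}v_4$ and $x_0x_1^{\xi_1}x_2^{\xi_2}x_3x_4^{\xi_4}v_7$ ($\xi_j\in\{0,1\}$ arbitrary). *)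

theory Defs
  imports Complex_Main "HOL-Library.Groups_Big_Fun" "HOL-Library.Function_Algebras"
begin

text \<open>An element is given by its coefficient function on the basis monomials
  x_S = x_{s_1} ... x_{s_m} (s_1 < ... < s_m), S a finite set of indices.\<close>

type_synonym 'k grass = "nat set \<Rightarrow> 'k"
type_synonym 'k op = "'k grass \<Rightarrow> 'k grass"

definition Lam :: "'k::field grass set" where
  "Lam = {f. finite {S. f S \<noteq> 0} \<and> (\<forall>S. f S \<noteq> 0 \<longrightarrow> finite S)}"

definition sgn_before :: "nat \<Rightarrow> nat set \<Rightarrow> 'k::field" where
  "sgn_before i S = (-1) ^ card {j \<in> S. j < i}"

text \<open>left multiplication by x_i\<close>
definition xop :: "nat \<Rightarrow> 'k::field op" where
  "xop i f = (\<lambda>S. if i \<in> S then sgn_before i S * f (S - {i}) else 0)"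

text \<open>odd superderivation d_i with d_i(x_j) = delta_ij\<close>
definition dop :: "nat \<Rightarrow> 'k::field op" where
  "dop i f = (\<lambda>S. if i \<notin> S then sgn_before i S * f (insert i S) else 0)"

fun preprod :: "nat \<Rightarrow> nat \<Rightarrow> 'k::field op" where
  "preprod i 0 = id"
| "preprod i (Suc k) = preprod i k \<circ> xop (i + 3*k) \<circ> xop (i + 3*k + 1)"

text \<open>pivot element v_i = sum_{k>=0} (prod ...) d_{i+3k}; the infinite sum is
  locally finite and is evaluated coefficientwise (Sum_any = sum over the
  finitely many nonzero terms).\<close>
definition vraw :: "nat \<Rightarrow> 'k::field op" where
  "vraw i f = (\<lambda>S. Sum_any (\<lambda>k. (preprod i k \<circ> dop (i + 3*k)) f S))"

text \<open>restriction of an operator to Lambda; End Lambda is identified with the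
  operators vanishing outside Lambda\<close>
definition restr :: "'k::field op \<Rightarrow> 'k op" where
  "restr A = (\<lambda>f. if f \<in> Lam then A f else 0)"

definition pivot :: "nat \<Rightarrow> 'k::field op" where
  "pivot i = restr (vraw i)"

definition monop :: "nat set \<Rightarrow> 'k::field op" where
  "monop T = foldr (\<circ>) (map xop (sorted_list_of_set T)) id"

definition scl :: "'k::field \<Rightarrow> 'k op \<Rightarrow> 'k op" where
  "scl c A = (\<lambda>f S. c * A f S)"

text \<open>commutator in (End Lambda)^(-); in characteristic 2 the super commutator
  ab - (-1)^{|a||b|} ba coincides with ab - ba\<close>
definition brk :: "'k::field op \<Rightarrow> 'k op \<Rightarrow> 'k op" where
  "brk A B = (A \<circ> B) - (B \<circ> A)"

definition sq :: "'k::field op \<Rightarrow> 'k op" where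
  "sq A = A \<circ> A"

definition homog :: "bool \<Rightarrow> 'k::field grass \<Rightarrow> bool" where
  "homog b f \<longleftrightarrow> f \<in> Lam \<and> (\<forall>S. f S \<noteq> 0 \<longrightarrow> odd (card S) = b)"

definition odd_op :: "'k::field op \<Rightarrow> bool" where
  "odd_op A \<longleftrightarrow> (\<forall>b f. homog b f \<longrightarrow> homog (\<not> b) (A f))"

definition lie_closed :: "'k::field op set \<Rightarrow> bool" where
  "lie_closed L \<longleftrightarrow> module.subspace scl L \<and> (\<forall>A\<in>L. \<forall>B\<in>L. brk A B \<in> L)"

definition lie_gen :: "'k::field op set \<Rightarrow> 'k op set" where
  "lie_gen G = \<Inter>{L. G \<subseteq> L \<and> lie_closed L}"

definition rlie_gen :: "'k::field op set \<Rightarrow> 'k op set" where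
  "rlie_gen G = \<Inter>{L. G \<subseteq> L \<and> lie_closed L \<and> (\<forall>A\<in>L. sq A \<in> L)}"

definition slie_gen :: "'k::field op set \<Rightarrow> 'k op set" where
  "slie_gen G = \<Inter>{L. G \<subseteq> L \<and> lie_closed L \<and> (\<forall>A\<in>L. odd_op A \<longrightarrow> sq A \<in> L)}"

definition is_basis :: "'k::field op set \<Rightarrow> 'k op set \<Rightarrow> bool" where
  "is_basis B L \<longleftrightarrow> \<not> module.dependent scl B \<and> module.span scl B = L"

text \<open>standard monomials of the first type: r_{n-3} v_n, with r_{n-3} = x_T,
  T \<subseteq> {0..n-3}, except x_0 x_1^a v_4 and x_0 x_1^a x_2^b x_3 x_4^c v_7\<close>
definition std1 :: "'k::field op set" where
  "std1 = {restr (monop T \<circ> vraw n) | n T.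
      T \<subseteq> {i. i + 3 \<le> n}
      \<and> \<not> (n = 4 \<and> 0 \<in> T)
      \<and> \<not> (n = 7 \<and> 0 \<in> T \<and> 3 \<in> T)}"

text \<open>the squares of the pivot elements, x_{n-2} v_n, n \<ge> 3\<close>
definition sqpiv :: "'k::field op set" where
  "sqpiv = {restr (xop (n - 2) \<circ> vraw n) | n. 3 \<le> n}"

end

theory Submission
  imports Defs
begin

text \<open>
  In characteristic 2 all signs disappear: x_T acts on coefficient functions by shifting index
  sets, d_i by deleting the index i, and the pivot v_n is the locally finite sum of its terms
  x_P d_(n+3k). Everything rests on three coefficient identities: the recursion
  v_n = d_n + x_n x_(n+1) v_(n+3), a Leibniz rule for v_b (x_T f), and, derived from them,
  [v_a, v_b] = x_D v_m (zero if 3 divides b - a) and v_a^2 = x_(a+1) v_(a+3).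

  Consequently the bracket of two standard monomials x_A v_a and x_B v_b is a sum of standard
  monomials, so their span is a Lie algebra, and adding the squares x_(n-2) v_n of the pivots
  keeps it closed under brackets and squares. Conversely, by induction on n, the largest standard
  monomial with pivot v_n is the bracket of some v_j with a standard monomial of smaller pivot
  index, and bracketing with v_j deletes the factor x_j; so every algebra containing v_0, v_1, v_2
  contains all standard monomials. Linear independence follows by applying the operators to x_n
  and reading off a single coefficient.
\<close>

section \<open>Multiplication by monomials\<close>

text \<open>Left multiplication by x_T without signs; in characteristic 2 this is the operator
  monop T (see monop_char2).\<close>

definition mul_mono :: "nat set \<Rightarrow> 'k::zero grass \<Rightarrow> 'k grass" where
  "mul_mono T g = (\<lambda>U. if T \<subseteq> U then g (U - T) else 0)"

text \<open>The sum defining vraw n f U is finite only for finite U. Identities between coefficient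
  functions are therefore proved for functions vanishing on infinite index sets, where it
  suffices to compare them on finite ones.\<close>

definition finitary :: "'k::zero grass \<Rightarrow> bool" where
  "finitary g \<longleftrightarrow> (\<forall>U. infinite U \<longrightarrow> g U = 0)"

lemma sum_apply: "(\<Sum>k\<in>K. g k) x = (\<Sum>k\<in>K. g k x)"
  by (induction K rule: infinite_finite_induct) auto

lemma mul_mono_mul_mono:
  "mul_mono S (mul_mono T g) = (if S \<inter> T = {} then mul_mono (S \<union> T) g else 0)"
  by (auto simp: fun_eq_iff mul_mono_def Diff_Un Un_commute intro!: arg_cong[where f=g])

lemma mul_mono_empty [simp]: "mul_mono {} = id"
  by (simp add: mul_mono_def fun_eq_iff)

lemma mul_mono_zero [simp]: "mul_mono T 0 = 0"
  by (simp add: mul_mono_def fun_eq_iff)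

lemma mul_mono_add: "mul_mono T (g + h) = mul_mono T g + mul_mono T (h :: 'k::monoid_add grass)"
  by (simp add: mul_mono_def fun_eq_iff)

lemma mul_mono_sum: "mul_mono T (\<Sum>k\<in>K. g k) = (\<Sum>k\<in>K. mul_mono T (g k :: 'k::comm_monoid_add grass))"
  by (simp add: mul_mono_def fun_eq_iff sum_apply)

lemma finitary_zero [simp]: "finitary 0"
  by (simp add: finitary_def)

lemma finitary_add: "finitary g \<Longrightarrow> finitary h \<Longrightarrow> finitary (g + (h :: 'k::monoid_add grass))"
  by (simp add: finitary_def)

lemma finitary_sum:
  "(\<And>k. k \<in> K \<Longrightarrow> finitary (g k)) \<Longrightarrow> finitary (\<Sum>k\<in>K. g k :: 'k::comm_monoid_add grass)"
  by (simp add: finitary_def sum_apply)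

lemma finitary_mul_mono: "finite T \<Longrightarrow> finitary g \<Longrightarrow> finitary (mul_mono T g)"
  by (simp add: finitary_def mul_mono_def)

lemma finitary_eqI:
  assumes "finitary g" "finitary h" "\<And>U. finite U \<Longrightarrow> g U = h U"
  shows "g = h"
  using assms by (metis finitary_def ext)

lemma Lam_finitary: "f \<in> Lam \<Longrightarrow> finitary f"
  by (auto simp: Lam_def finitary_def)

lemma Lam_iff_finite_support: "f \<in> Lam \<longleftrightarrow> finitary f \<and> finite {S. f S \<noteq> 0}"
  by (auto simp: Lam_def finitary_def)

lemma Lam_zero [simp]: "0 \<in> Lam"
  by (simp add: Lam_def)

lemma Lam_add: "f \<in> Lam \<Longrightarrow> g \<in> Lam \<Longrightarrow> f + g \<in> Lam"
proof -
  assume "f \<in> Lam" "g \<in> Lam"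
  moreover have "{S. (f + g) S \<noteq> 0} \<subseteq> {S. f S \<noteq> 0} \<union> {S. g S \<noteq> 0}" by auto
  ultimately show ?thesis by (auto simp: Lam_iff_finite_support intro: finitary_add finite_subset)
qed

lemma Lam_scale: "f \<in> Lam \<Longrightarrow> (\<lambda>S. c * f S) \<in> Lam"
  by (auto simp: Lam_def elim!: finite_subset[rotated])

lemma Lam_uminus: "f \<in> Lam \<Longrightarrow> - f \<in> Lam"
  by (simp add: Lam_def)

lemma mul_mono_Lam: "finite T \<Longrightarrow> f \<in> Lam \<Longrightarrow> mul_mono T f \<in> Lam"
proof -
  assume "finite T" "f \<in> Lam"
  moreover have "{U. mul_mono T f U \<noteq> 0} \<subseteq> (\<lambda>W. W \<union> T) ` {S. f S \<noteq> 0}"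
    by (auto simp: mul_mono_def split: if_splits intro!: image_eqI[where x="_ - T"])
  ultimately show ?thesis
    by (auto simp: Lam_iff_finite_support intro: finitary_mul_mono finite_subset)
qed

section \<open>The terms of a pivot element\<close>

text \<open>blocks n k indexes the monomial x_n x_(n+1) x_(n+3) x_(n+4) ... x_(n+3k-3) x_(n+3k-2) in
  front of d_(n+3k) in v_n.\<close>

definition blocks :: "nat \<Rightarrow> nat \<Rightarrow> nat set" where
  "blocks n k = {n + 3*t | t. t < k} \<union> {n + 3*t + 1 | t. t < k}"

lemma mem_blocks_iff: "x \<in> blocks n k \<longleftrightarrow> n \<le> x \<and> x < n + 3*k \<and> (x - n) mod 3 \<noteq> 2"
proof
  assume "x \<in> blocks n k"
  then show "n \<le> x \<and> x < n + 3*k \<and> (x - n) mod 3 \<noteq> 2"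
    unfolding blocks_def by auto
next
  assume x: "n \<le> x \<and> x < n + 3*k \<and> (x - n) mod 3 \<noteq> 2"
  define t where "t = (x - n) div 3"
  have "x = n + 3*t + (x - n) mod 3" using x unfolding t_def by simp
  moreover have "t < k" using x unfolding t_def by linarith
  moreover have "(x - n) mod 3 = 0 \<or> (x - n) mod 3 = 1"
    using x by linarith
  ultimately show "x \<in> blocks n k" unfolding blocks_def by auto
qed

lemma blocks_0 [simp]: "blocks n 0 = {}"
  by (simp add: mem_blocks_iff set_eq_iff)

lemma blocks_Suc: "blocks n (Suc k) = blocks n k \<union> {n + 3*k, n + 3*k + 1}"
  unfolding blocks_def by (auto simp: less_Suc_eq)

lemma blocks_Suc_left: "blocks n (Suc k) = {n, n + 1} \<union> blocks (n + 3) k"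
proof -
  have "{n + 3*t | t. t < Suc k} = {n} \<union> {n + 3 + 3*t | t. t < k}"
    "{n + 3*t + 1 | t. t < Suc k} = {n + 1} \<union> {n + 3 + 3*t + 1 | t. t < k}"
    by (auto simp: less_Suc_eq_0_disj) (metis add_Suc_right mult_Suc_right)+
  then show ?thesis unfolding blocks_def by auto
qed

lemma finite_blocks [simp]: "finite (blocks n k)"
  by (rule finite_subset[of _ "{..<n + 3*k}"]) (auto simp: mem_blocks_iff)

lemma blocks_bounds: "x \<in> blocks n k \<Longrightarrow> n \<le> x \<and> x + 2 \<le> n + 3*k"
  by (auto simp: blocks_def)

lemma pivot_index_notin_blocks [simp]: "n + 3*k \<notin> blocks n k"
  by (simp add: mem_blocks_iff)

lemma card_blocks: "card (blocks n k) = 2 * k"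
proof (induction k)
  case (Suc k)
  have "n + 3*k \<notin> blocks n k" "n + 3*k + 1 \<notin> blocks n k"
    using blocks_bounds by fastforce+
  with Suc show ?case by (simp add: blocks_Suc)
qed simp

definition pivot_term :: "nat \<Rightarrow> nat \<Rightarrow> 'k::zero grass \<Rightarrow> 'k grass" where
  "pivot_term n k f U =
    (if blocks n k \<subseteq> U \<and> n + 3*k \<notin> U then f (insert (n + 3*k) (U - blocks n k)) else 0)"

lemma pivot_term_nonzero_card: "finite U \<Longrightarrow> pivot_term n k f U \<noteq> 0 \<Longrightarrow> k \<le> card U"
  using card_mono[of U "blocks n k"] card_blocks[of n k]
  by (auto simp: pivot_term_def split: if_splits)

lemma pivot_term_infinite: "finitary f \<Longrightarrow> infinite U \<Longrightarrow> pivot_term n k f U = 0"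
  by (simp add: finitary_def pivot_term_def)

lemma finitary_dop: "finitary f \<Longrightarrow> finitary (dop i f)"
  by (simp add: finitary_def dop_def)

lemma pivot_term_Suc:
  "pivot_term n (Suc k) f U =
    (if {n, n + 1} \<subseteq> U then pivot_term (n + 3) k f (U - {n, n + 1}) else 0)"
proof -
  have "n \<notin> blocks (n + 3) k" "n + 1 \<notin> blocks (n + 3) k"
    using blocks_bounds by fastforce+
  then have "blocks (n + 3) k \<subseteq> U - {n, n + 1} \<longleftrightarrow> blocks (n + 3) k \<subseteq> U"
    "U - ({n, n + 1} \<union> blocks (n + 3) k) = U - {n, n + 1} - blocks (n + 3) k"
    by auto
  moreover have "n + 3 * Suc k = n + 3 + 3*k" by simp
  ultimately show ?thesis
    unfolding pivot_term_def blocks_Suc_left by (simp only:) auto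
qed

text \<open>The terms of the Leibniz rule for v_b (x_T f): the indices k for which d_(b+3k) meets a
  factor of x_T without the prefix x_(blocks b k) annihilating the rest of x_T, and the
  resulting monomials.\<close>

definition hit_indices :: "nat \<Rightarrow> nat set \<Rightarrow> nat set" where
  "hit_indices b T = {k. b + 3*k \<in> T \<and> (T - {b + 3*k}) \<inter> blocks b k = {}}"

definition hit_mono :: "nat \<Rightarrow> nat set \<Rightarrow> nat \<Rightarrow> nat set" where
  "hit_mono b T k = T - {b + 3*k} \<union> blocks b k"

lemma finite_hit_mono [simp]: "finite T \<Longrightarrow> finite (hit_mono b T k)"
  by (simp add: hit_mono_def)

lemma finite_hit_indices: "finite T \<Longrightarrow> finite (hit_indices b T)"
  by (rule finite_subset[of _ "(\<lambda>x. (x - b) div 3) ` T"])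
    (auto simp: hit_indices_def intro!: image_eqI)

lemma hit_indices_below: "\<forall>i\<in>T. i < b \<Longrightarrow> hit_indices b T = {}"
  by (auto simp: hit_indices_def)

lemma hit_indices_member:
  assumes "j \<in> T"
  shows "hit_indices j T = {0}"
proof -
  have "j \<in> blocks j k" if "k \<noteq> 0" for k
    using that by (simp add: mem_blocks_iff)
  with assms show ?thesis
    by (auto simp: hit_indices_def)
qed

lemma hit_indices_pair: "a < b \<Longrightarrow> hit_indices b {a, a + 1} = (if b = a + 1 then {0} else {})"
  by (auto simp: hit_indices_def)

definition pivot_anticomm :: "nat \<Rightarrow> nat \<Rightarrow> 'k::field grass \<Rightarrow> 'k grass" where
  "pivot_anticomm a b f = vraw a (vraw b f) + vraw b (vraw a f)"

lemma pivot_anticomm_sym: "pivot_anticomm a b f = pivot_anticomm b a f"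
  by (simp add: pivot_anticomm_def add.commute)

text \<open>For a \<le> b with b - a not divisible by 3,
  [v_a, v_b] = x_(comm_mono a b) v_(comm_pivot a b) (see pivot_anticomm_eq).\<close>

definition comm_mono :: "nat \<Rightarrow> nat \<Rightarrow> nat set" where
  "comm_mono a b =
    (let q = (b - a) div 3 in
     if (b - a) mod 3 = 1 then blocks a q \<union> {a + 3*q}
     else blocks a q \<union> {a + 3*q, a + 3*q + 1, a + 3*q + 2})"

definition comm_pivot :: "nat \<Rightarrow> nat \<Rightarrow> nat" where
  "comm_pivot a b = (if (b - a) mod 3 = 1 then b + 2 else b + 3)"

lemma finite_comm_mono [simp]: "finite (comm_mono a b)"
  by (simp add: comm_mono_def Let_def)

lemma comm_mono_step: "a + 3 \<le> b \<Longrightarrow> comm_mono a b = {a, a + 1} \<union> comm_mono (a + 3) b"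
proof -
  assume "a + 3 \<le> b"
  then obtain c where "b = a + 3 + c" using le_Suc_ex by blast
  then show ?thesis
    by (simp add: comm_mono_def Let_def blocks_Suc_left insert_commute add.assoc)
qed

lemma comm_pivot_step: "a + 3 \<le> b \<Longrightarrow> comm_pivot (a + 3) b = comm_pivot a b"
proof -
  assume "a + 3 \<le> b"
  then obtain c where "b = a + 3 + c" using le_Suc_ex by blast
  then show ?thesis by (simp add: comm_pivot_def)
qed

lemma comm_mono_lower: "i \<in> comm_mono a b \<Longrightarrow> a \<le> i"
  by (auto simp: comm_mono_def Let_def split: if_splits dest: blocks_bounds)

lemma comm_mono_self: "a + 3 \<le> b \<Longrightarrow> a \<in> comm_mono a b"
  by (simp add: comm_mono_step)

lemma comm_mono_Suc: "comm_mono a (a + 1) = {a}" and comm_pivot_Suc: "comm_pivot a (a + 1) = a + 3"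
  by (simp_all add: comm_mono_def comm_pivot_def)

lemma comm_mono_Suc_Suc: "comm_mono a (a + 2) = {a, a + 1, a + 2}"
  and comm_pivot_Suc_Suc: "comm_pivot a (a + 2) = a + 5"
  by (simp_all add: comm_mono_def comm_pivot_def insert_commute)

definition mono_pivot :: "nat set \<Rightarrow> nat \<Rightarrow> 'k::field op" where
  "mono_pivot T n = restr (mul_mono T \<circ> vraw n)"

lemma pivot_eq_mono_pivot: "pivot i = mono_pivot {} i"
  by (simp add: pivot_def mono_pivot_def)

lemma mono_pivot_apply: "f \<in> Lam \<Longrightarrow> mono_pivot T n f = mul_mono T (vraw n f)"
  by (simp add: mono_pivot_def restr_def)

lemma mono_pivot_notin_Lam: "f \<notin> Lam \<Longrightarrow> mono_pivot T n f = 0"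
  by (simp add: mono_pivot_def restr_def)

lemma restr_cong: "(\<And>f. f \<in> Lam \<Longrightarrow> X f = Y f) \<Longrightarrow> restr X = restr Y"
  by (simp add: restr_def fun_eq_iff)

lemma restr_add: "restr (X + Y) = restr X + restr (Y :: 'k::field op)"
  by (simp add: restr_def fun_eq_iff)

lemma restr_zero [simp]: "restr (0 :: 'k::field op) = 0"
  by (simp add: restr_def fun_eq_iff)

lemma restr_sum: "restr (\<Sum>k\<in>K. X k :: 'k::field op) = (\<Sum>k\<in>K. restr (X k))"
proof (induction K rule: infinite_finite_induct)
  case (insert x F)
  then show ?case by (simp only: sum.insert[OF insert(1,2)] restr_add)
next
  case (infinite K)
  then show ?case by (simp only: sum.infinite[OF infinite] restr_zero)
qed (simp only: sum.empty restr_zero)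

section \<open>Linear operators on the Grassmann algebra\<close>

interpretation ops: module "scl :: 'k::field \<Rightarrow> 'k op \<Rightarrow> 'k op"
  by standard (auto simp: scl_def fun_eq_iff algebra_simps)

definition lin_op :: "'k::field op \<Rightarrow> bool" where
  "lin_op A \<longleftrightarrow> (\<forall>f. f \<notin> Lam \<longrightarrow> A f = 0) \<and> (\<forall>f\<in>Lam. A f \<in> Lam)
     \<and> (\<forall>f\<in>Lam. \<forall>g\<in>Lam. A (f + g) = A f + A g)
     \<and> (\<forall>c. \<forall>f\<in>Lam. A (\<lambda>S. c * f S) = (\<lambda>S. c * A f S))"

lemma lin_opD:
  assumes "lin_op A"
  shows "f \<notin> Lam \<Longrightarrow> A f = 0" "f \<in> Lam \<Longrightarrow> A f \<in> Lam"
    "f \<in> Lam \<Longrightarrow> g \<in> Lam \<Longrightarrow> A (f + g) = A f + A g"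
    "f \<in> Lam \<Longrightarrow> A (\<lambda>S. c * f S) = (\<lambda>S. c * A f S)"
  using assms unfolding lin_op_def by auto

lemma lin_op_zero_arg: "lin_op A \<Longrightarrow> A 0 = 0"
  using lin_opD(3)[of A 0 0] by simp

lemma lin_op_0: "lin_op (0 :: 'k::field op)"
  by (simp add: lin_op_def fun_eq_iff)

lemma lin_op_add: "lin_op A \<Longrightarrow> lin_op B \<Longrightarrow> lin_op (A + B)"
  by (simp add: lin_op_def Lam_add fun_eq_iff distrib_left add_ac)

lemma lin_op_uminus: "lin_op A \<Longrightarrow> lin_op (- A)"
  by (simp add: lin_op_def Lam_uminus fun_eq_iff)

lemma lin_op_scl: "lin_op A \<Longrightarrow> lin_op (scl c A)"
  by (simp add: lin_op_def scl_def Lam_scale fun_eq_iff distrib_left mult.left_commute)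

lemma lin_op_comp:
  assumes "lin_op A" "lin_op B"
  shows "lin_op (A \<circ> B)"
  using assms lin_op_zero_arg[OF assms(1)] unfolding lin_op_def by simp

lemma lin_op_brk: "lin_op A \<Longrightarrow> lin_op B \<Longrightarrow> lin_op (brk A B)"
  unfolding brk_def diff_conv_add_uminus by (intro lin_op_add lin_op_uminus lin_op_comp)

lemma lin_op_sq: "lin_op A \<Longrightarrow> lin_op (sq A)"
  unfolding sq_def by (rule lin_op_comp)

lemma lin_op_span:
  assumes "\<And>b. b \<in> B \<Longrightarrow> lin_op b" "x \<in> ops.span B"
  shows "lin_op x"
  using assms(2)
proof (induction rule: ops.span_induct_alt)
  case (step c b y)
  show ?case by (rule lin_op_add[OF lin_op_scl[OF assms(1)[OF step(1)]] step(2)])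
qed (rule lin_op_0)

lemma brk_antisym: "brk x y = - brk y (x :: 'k::field op)"
  by (simp add: brk_def)

lemma brk_add_left:
  assumes x: "lin_op x" and y: "lin_op y" and z: "lin_op z"
  shows "brk (x + y) z = brk x z + brk y (z :: 'k::field op)"
proof
  fix f :: "'k grass"
  show "brk (x + y) z f = (brk x z + brk y z) f"
    using lin_opD[OF x] lin_opD[OF y] lin_opD[OF z] lin_op_zero_arg[OF z]
    by (cases "f \<in> Lam") (simp_all add: brk_def)
qed

lemma brk_scl_left:
  assumes x: "lin_op x" and z: "lin_op z"
  shows "brk (scl c x) z = scl c (brk x (z :: 'k::field op))"
proof
  fix f :: "'k grass"
  show "brk (scl c x) z f = scl c (brk x z) f"
  proof (cases "f \<in> Lam")
    case True
    then show ?thesis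
      using lin_opD(4)[OF z lin_opD(2)[OF x True]]
      by (simp add: brk_def scl_def fun_eq_iff right_diff_distrib)
  next
    case False
    then show ?thesis
      using lin_opD(1)[OF x False] lin_opD(1)[OF z False]
        lin_opD(1)[OF lin_op_scl[OF lin_op_brk[OF x z]] False]
        lin_op_zero_arg[OF lin_op_scl[OF x]] lin_op_zero_arg[OF z]
      by (simp add: brk_def scl_def zero_fun_def[symmetric])
  qed
qed

lemma sq_scl:
  assumes b: "lin_op b"
  shows "sq (scl c b) = scl (c * c) (sq (b :: 'a::field op))"
proof
  fix f :: "'a grass"
  show "sq (scl c b) f = scl (c * c) (sq b) f"
  proof (cases "f \<in> Lam")
    case True
    then show ?thesis
      using lin_opD(4)[OF b lin_opD(2)[OF b True]] by (simp add: sq_def scl_def mult.assoc)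
  next
    case False
    then show ?thesis
      using lin_opD(1)[OF b False] lin_op_zero_arg[OF b]
      by (simp add: sq_def scl_def zero_fun_def[symmetric])
  qed
qed

lemma span_brk_left:
  assumes B: "\<And>b. b \<in> B \<Longrightarrow> lin_op b" and z: "lin_op z"
    and Bz: "\<And>b. b \<in> B \<Longrightarrow> brk b z \<in> ops.span B"
    and x: "x \<in> ops.span B"
  shows "brk x (z :: 'k::field op) \<in> ops.span B"
proof -
  from x have "lin_op x \<and> brk x z \<in> ops.span B"
  proof (induction rule: ops.span_induct_alt)
    case base
    have "brk 0 z = 0"
      using lin_op_zero_arg[OF z] by (simp add: brk_def fun_eq_iff)
    show ?case unfolding \<open>brk 0 z = 0\<close> using lin_op_0 ops.span_zero by blast
  next
    case (step c b y)
    have b: "lin_op b" and y: "lin_op y" using B[OF step(1)] step(2) by blast+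
    have "lin_op (scl c b + y)"
      by (rule lin_op_add[OF lin_op_scl[OF b] y])
    moreover have "brk (scl c b + y) z = scl c (brk b z) + brk y z"
      by (simp only: brk_add_left[OF lin_op_scl[OF b] y z] brk_scl_left[OF b z])
    moreover have "scl c (brk b z) + brk y z \<in> ops.span B"
      using Bz[OF step(1)] step(2) by (intro ops.span_add ops.span_scale) blast+
    ultimately show ?case by (simp add: plus_fun_def)
  qed
  then show ?thesis ..
qed

lemma lie_closed_span:
  assumes B: "\<And>b. b \<in> B \<Longrightarrow> lin_op b"
    and BB: "\<And>b b'. b \<in> B \<Longrightarrow> b' \<in> B \<Longrightarrow> brk b b' \<in> ops.span B"
  shows "lie_closed (ops.span (B :: 'k::field op set))"
  unfolding lie_closed_def
proof (intro conjI ballI ops.subspace_span)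
  fix x y assume x: "x \<in> ops.span B" and y: "y \<in> ops.span B"
  have yB: "brk b y \<in> ops.span B" if "b \<in> B" for b
  proof -
    have "brk y b \<in> ops.span B"
      using B B[OF that] BB[OF _ that] y by (rule span_brk_left)
    then show ?thesis
      by (metis brk_antisym ops.span_neg)
  qed
  show "brk x y \<in> ops.span B"
    using span_brk_left[OF B lin_op_span[OF B y] yB x] .
qed

lemma lie_gen_eq_hull: "lie_gen G = lie_closed hull G"
  by (simp add: lie_gen_def hull_def conj_commute)

lemma slie_gen_eq_hull:
  "slie_gen G = (\<lambda>L. lie_closed L \<and> (\<forall>A\<in>L. odd_op A \<longrightarrow> sq A \<in> L)) hull G"
  by (simp add: slie_gen_def hull_def conj_commute)

lemma rlie_gen_eq_hull: "rlie_gen G = (\<lambda>L. lie_closed L \<and> (\<forall>A\<in>L. sq A \<in> L)) hull G"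
  by (simp add: rlie_gen_def hull_def conj_commute)

section \<open>Index sets of the standard monomials\<close>

definition std_index :: "nat set \<Rightarrow> nat \<Rightarrow> bool" where
  "std_index T n \<longleftrightarrow> T \<subseteq> {i. i + 3 \<le> n} \<and> \<not> (n = 4 \<and> 0 \<in> T) \<and> \<not> (n = 7 \<and> 0 \<in> T \<and> 3 \<in> T)"

lemma std_index_bound: "std_index T n \<Longrightarrow> i \<in> T \<Longrightarrow> i + 3 \<le> n"
  by (auto simp: std_index_def)

lemma std_index_finite: "std_index T n \<Longrightarrow> finite T"
  by (rule finite_subset[of _ "{..<n}"]) (auto dest: std_index_bound)

lemma std_index_subset: "std_index R n \<Longrightarrow> T \<subseteq> R \<Longrightarrow> std_index T n"
  by (auto simp: std_index_def)

lemma std_index_empty [simp]: "std_index {} n"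
  by (simp add: std_index_def)

lemma std_index_hit_mono:
  assumes A: "std_index A a" and B: "std_index B b" and ab: "a \<le> b" and j: "a + 3*k \<in> B"
  shows "std_index (A \<union> hit_mono a B k) b"
proof -
  let ?S = "A \<union> hit_mono a B k"
  have jb: "a + 3*k + 3 \<le> b" using std_index_bound[OF B j] .
  have blocks: "i \<in> blocks a k \<Longrightarrow> a \<le> i \<and> i + 2 \<le> a + 3*k" for i
    by (rule blocks_bounds)
  have "i + 3 \<le> b" if "i \<in> ?S" for i
    using that std_index_bound[OF A, of i] std_index_bound[OF B, of i] blocks[of i] ab jb
    by (auto simp: hit_mono_def)
  moreover have "\<not> (b = 4 \<and> 0 \<in> ?S)"
  proof
    assume h: "b = 4 \<and> 0 \<in> ?S"
    then have "a + 3*k \<le> 1" using jb by simp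
    then show False
      using h B std_index_bound[OF A, of 0] blocks[of 0] by (auto simp: std_index_def hit_mono_def)
  qed
  moreover have "\<not> (b = 7 \<and> 0 \<in> ?S \<and> 3 \<in> ?S)"
  proof
    assume h: "b = 7 \<and> 0 \<in> ?S \<and> 3 \<in> ?S"
    then have j4: "a + 3*k \<le> 4" using jb by simp
    then have "3 \<notin> A" "3 \<notin> blocks a k"
      using std_index_bound[OF A, of 3] blocks[of 3] by auto
    then have B3: "3 \<in> B" "a + 3*k \<noteq> 3" using h by (auto simp: hit_mono_def)
    then have "0 \<notin> B" using B h by (auto simp: std_index_def)
    moreover have "0 \<notin> blocks a k"
      using blocks[of 0] j4 B3(2) by (auto simp: mem_blocks_iff)
    moreover have "0 \<notin> A"
    proof
      assume "0 \<in> A"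
      with A have "3 \<le> a" "a \<noteq> 4" by (auto simp: std_index_def dest: std_index_bound)
      with j4 B3(2) show False by arith
    qed
    ultimately show False using h by (auto simp: hit_mono_def)
  qed
  ultimately show ?thesis by (auto simp: std_index_def)
qed

lemma std_index_comm_mono:
  assumes A: "std_index A a" and B: "std_index B b" and ab: "a \<le> b" and r: "(b - a) mod 3 \<noteq> 0"
  shows "std_index (A \<union> B \<union> comm_mono a b) (comm_pivot a b)"
proof -
  define q where "q = (b - a) div 3"
  have bound: "i + 3 \<le> b" if "i \<in> A \<union> B" for i
    using that std_index_bound[OF A] std_index_bound[OF B] ab by fastforce
  have blocks: "i \<in> blocks a q \<Longrightarrow> a \<le> i \<and> i + 2 \<le> a + 3*q" for i
    by (rule blocks_bounds)
  consider "(b - a) mod 3 = 1" | "(b - a) mod 3 = 2" using r by linarith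
  then show ?thesis
  proof cases
    case 1
    then have b: "b = a + 3*q + 1"
      using mult_div_mod_eq[of 3 "b - a"] ab unfolding q_def by linarith
    have D: "comm_mono a b = blocks a q \<union> {a + 3*q}" "comm_pivot a b = b + 2"
      using 1 by (simp_all add: comm_mono_def comm_pivot_def q_def Let_def)
    have "b + 2 = 4 \<Longrightarrow> 0 \<notin> A \<union> B \<union> comm_mono a b"
      "b + 2 = 7 \<Longrightarrow> 3 \<notin> A \<union> B \<union> comm_mono a b"
      using bound[of 0] bound[of 3] blocks[of 0] blocks[of 3] b unfolding D by auto
    moreover have "i + 3 \<le> b + 2" if "i \<in> A \<union> B \<union> comm_mono a b" for i
      using that bound[of i] blocks[of i] b unfolding D by auto
    ultimately show ?thesis unfolding std_index_def D by blast
  next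
    case 2
    then have b: "b = a + 3*q + 2"
      using mult_div_mod_eq[of 3 "b - a"] ab unfolding q_def by linarith
    have D: "comm_mono a b = blocks a q \<union> {a + 3*q, a + 3*q + 1, a + 3*q + 2}"
      "comm_pivot a b = b + 3"
      using 2 by (simp_all add: comm_mono_def comm_pivot_def q_def Let_def)
    have "b + 3 = 7 \<Longrightarrow> 0 \<notin> A \<union> B \<union> comm_mono a b"
    proof
      assume "b + 3 = 7" "0 \<in> A \<union> B \<union> comm_mono a b"
      moreover have "0 \<notin> B" using B \<open>b + 3 = 7\<close> by (auto simp: std_index_def)
      ultimately show False
        using std_index_bound[OF A, of 0] blocks[of 0] b unfolding D by auto presburger
    qed
    moreover have "i + 3 \<le> b + 3" if "i \<in> A \<union> B \<union> comm_mono a b" for i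
      using that bound[of i] blocks[of i] b unfolding D by auto
    moreover have "b + 3 \<noteq> 4" using b by simp
    ultimately show ?thesis unfolding std_index_def D by blast
  qed
qed

lemma std_index_cases:
  assumes T: "std_index T n"
  obtains "n \<noteq> 4" "n \<noteq> 7" "T \<subseteq> {i. i + 3 \<le> n}"
    | "n = 4" "T \<subseteq> {1}"
    | "n = 7" "T \<subseteq> {1, 2, 3, 4}"
    | "n = 7" "T \<subseteq> {0, 1, 2, 4}"
proof -
  have le: "T \<subseteq> {..n - 3}" using std_index_bound[OF T] by fastforce
  consider "n = 4" | "n = 7" | "n \<noteq> 4" "n \<noteq> 7" by blast
  then show ?thesis
  proof cases
    case 1
    then have "T \<subseteq> {..1}" "0 \<notin> T" using le T by (auto simp: std_index_def)
    then have "T \<subseteq> {1}" by (auto simp: le_Suc_eq)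
    with 1 show ?thesis using that by blast
  next
    case 2
    then have "T \<subseteq> {0, 1, 2, 3, 4}" "\<not> (0 \<in> T \<and> 3 \<in> T)"
      using le T by (auto simp: std_index_def)
    then have "T \<subseteq> {1, 2, 3, 4} \<or> T \<subseteq> {0, 1, 2, 4}" by blast
    with 2 show ?thesis using that by blast
  next
    case 3
    with T show ?thesis using that by (auto simp: std_index_def)
  qed
qed

definition basis_index :: "nat set \<Rightarrow> nat \<Rightarrow> bool" where
  "basis_index T n \<longleftrightarrow> std_index T n \<or> (T = {n - 2} \<and> 3 \<le> n)"

definition xgen :: "nat \<Rightarrow> 'k::field grass" where
  "xgen n = (\<lambda>U. if U = {n} then 1 else 0)"

lemma xgen_Lam: "xgen n \<in> Lam"
  by (auto simp: Lam_def xgen_def)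

lemma pivot_term_xgen:
  "pivot_term m k (xgen n :: 'k::field grass) W = (if n = m + 3*k \<and> W = blocks m k then 1 else 0)"
proof -
  have "m + 3*k \<notin> blocks m k" by simp
  then have "(blocks m k \<subseteq> W \<and> m + 3*k \<notin> W \<and> insert (m + 3*k) (W - blocks m k) = {n})
      \<longleftrightarrow> n = m + 3*k \<and> W = blocks m k"
    by blast
  then show ?thesis
    unfolding pivot_term_def xgen_def by (auto split: if_splits)
qed

context
  assumes char2: "(1::'k::field) + 1 = 0"
begin

section \<open>Pivot elements in characteristic 2\<close>

lemma neg_char2: "- (x::'k) = x"
proof -
  have "x + x = x * (1 + 1)" by (simp add: algebra_simps)
  then show ?thesis using char2 by (simp add: add_eq_0_iff2 eq_neg_iff_add_eq_0)
qed

lemma add_self_char2: "(x::'k) + x = 0"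
  by (metis neg_char2 add.right_inverse)

lemma diff_char2: "(x::'k) - y = x + y"
  by (metis neg_char2 diff_conv_add_uminus)

lemma grass_add_self_char2: "(g::'k grass) + g = 0"
  by (simp only: plus_fun_def zero_fun_def add_self_char2)

lemma grass_diff_char2: "(g::'k grass) - h = g + h"
  by (simp add: fun_eq_iff diff_char2)

lemma sgn_before_char2: "(sgn_before i S :: 'k) = 1"
  unfolding sgn_before_def neg_char2 by (rule power_one)

lemma xop_char2: "(xop i :: 'k op) = mul_mono {i}"
  by (auto simp: fun_eq_iff xop_def mul_mono_def sgn_before_char2)

lemma dop_char2: "(dop i :: 'k op) f = (\<lambda>U. if i \<notin> U then f (insert i U) else 0)"
  by (auto simp: fun_eq_iff dop_def sgn_before_char2)

lemma monop_char2:
  assumes "finite T"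
  shows "(monop T :: 'k op) = mul_mono T"
proof -
  have "foldr (\<circ>) (map xop xs) id = (mul_mono (set xs) :: 'k op)" if "distinct xs" for xs
    using that by (induction xs) (simp_all add: comp_def xop_char2 mul_mono_mul_mono)
  from this[of "sorted_list_of_set T"] assms show ?thesis
    by (simp add: monop_def)
qed

lemma preprod_char2: "(preprod n k :: 'k op) = mul_mono (blocks n k)"
proof (induction k)
  case (Suc k)
  have "n + 3*k + 1 \<notin> blocks n k" by (simp add: mem_blocks_iff)
  with Suc show ?case
    by (simp add: fun_eq_iff xop_char2 mul_mono_mul_mono blocks_Suc insert_commute)
qed (simp add: fun_eq_iff)

text \<open>The Leibniz rule d_j (x_T f) = x_T d_j f + (d_j x_T) f for a single term x_P d_j of
  a pivot.\<close>

lemma single_term_leibniz: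
  assumes jP: "j \<notin> P"
  shows "(if P \<subseteq> U \<and> j \<notin> U then mul_mono T (f :: 'k grass) (insert j (U - P)) else 0)
    = mul_mono T (\<lambda>V. if P \<subseteq> V \<and> j \<notin> V then f (insert j (V - P)) else 0) U
      + (if j \<in> T \<and> (T - {j}) \<inter> P = {} then mul_mono (T - {j} \<union> P) f U else 0)"
proof (cases "j \<in> T")
  case False
  then have "(P \<subseteq> U \<and> j \<notin> U \<and> T \<subseteq> insert j (U - P)) \<longleftrightarrow> (T \<subseteq> U \<and> P \<subseteq> U - T \<and> j \<notin> U - T)"
    "insert j (U - P) - T = insert j (U - T - P)"
    by blast+
  with False show ?thesis
    unfolding mul_mono_def
    by (simp only: if_False if_cancel if_if_eq_conj conj_assoc simp_thms add_0_right)
next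
  case jT: True
  show ?thesis
  proof (cases "j \<in> U")
    case True
    have "(T \<subseteq> U \<and> P \<subseteq> U - T \<and> j \<notin> U - T) \<longleftrightarrow> ((T - {j}) \<inter> P = {} \<and> T - {j} \<union> P \<subseteq> U)"
      "insert j (U - T - P) = U - (T - {j} \<union> P)"
      using True jT jP by blast+
    with True jT show ?thesis
      unfolding mul_mono_def
      by (simp only: if_False if_True if_if_eq_conj conj_assoc simp_thms if_cancel add_self_char2)
  next
    case False
    have "(P \<subseteq> U \<and> j \<notin> U \<and> T \<subseteq> insert j (U - P)) \<longleftrightarrow> ((T - {j}) \<inter> P = {} \<and> T - {j} \<union> P \<subseteq> U)"
      "insert j (U - P) - T = U - (T - {j} \<union> P)"
      "\<not> (T \<subseteq> U \<and> P \<subseteq> U - T \<and> j \<notin> U - T)"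
      using False jT jP by blast+
    with jT show ?thesis
      unfolding mul_mono_def
      by (simp only: if_False if_True if_if_eq_conj conj_assoc simp_thms if_cancel add_0_left)
  qed
qed

lemma pivot_term_mul_mono:
  "pivot_term b k (mul_mono T (f :: 'k grass)) U =
    mul_mono T (pivot_term b k f) U
    + (if k \<in> hit_indices b T then mul_mono (hit_mono b T k) f U else 0)"
  using single_term_leibniz[of "b + 3*k" "blocks b k" U T f]
  unfolding pivot_term_def[abs_def] hit_indices_def hit_mono_def by simp

lemma vraw_eq_Sum_any: "vraw n (f :: 'k grass) U = Sum_any (\<lambda>k. pivot_term n k f U)"
  unfolding vraw_def
  by (intro Sum_any.cong) (auto simp: preprod_char2 dop_char2 mul_mono_def pivot_term_def)

lemma vraw_eq_sum:
  assumes "finite U" "card U \<le> N"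
  shows "vraw n (f :: 'k grass) U = (\<Sum>k\<le>N. pivot_term n k f U)"
proof -
  have "{k. pivot_term n k f U \<noteq> 0} \<subseteq> {..N}"
    using pivot_term_nonzero_card[OF assms(1)] assms(2) by fastforce
  then show ?thesis
    by (simp add: vraw_eq_Sum_any Sum_any.expand_superset)
qed

lemma finitary_vraw: "finitary f \<Longrightarrow> finitary (vraw n (f :: 'k grass))"
  by (simp add: finitary_def vraw_eq_Sum_any pivot_term_infinite)

lemma vraw_Lam:
  assumes f: "(f :: 'k grass) \<in> Lam"
  shows "vraw n f \<in> Lam"
proof -
  have "{U. vraw n f U \<noteq> 0} \<subseteq>
      (\<lambda>(W, j). (W - {j}) \<union> blocks n ((j - n) div 3)) ` (SIGMA W:{S. f S \<noteq> 0}. W)"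
  proof
    fix U assume "U \<in> {U. vraw n f U \<noteq> 0}"
    then obtain k where "pivot_term n k f U \<noteq> 0"
      by (auto simp: vraw_eq_Sum_any elim: Sum_any.not_neutral_obtains_not_neutral)
    then have "blocks n k \<subseteq> U" "n + 3*k \<notin> U" "f (insert (n + 3*k) (U - blocks n k)) \<noteq> 0"
      by (auto simp: pivot_term_def split: if_splits)
    moreover have "(n + 3*k - n) div 3 = k" by simp
    ultimately show "U \<in> (\<lambda>(W, j). (W - {j}) \<union> blocks n ((j - n) div 3))
        ` (SIGMA W:{S. f S \<noteq> 0}. W)"
      by (intro image_eqI[of _ _ "(insert (n + 3*k) (U - blocks n k), n + 3*k)"]) auto
  qed
  moreover have "finite (SIGMA W:{S. f S \<noteq> 0}. W)"
    using f by (auto simp: Lam_def intro!: finite_SigmaI)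
  ultimately have "finite {U. vraw n f U \<noteq> 0}"
    by (rule finite_subset[OF _ finite_imageI])
  with f show ?thesis
    by (simp add: Lam_iff_finite_support finitary_vraw Lam_finitary)
qed

lemma vraw_zero [simp]: "vraw n (0 :: 'k grass) = 0"
  by (simp add: fun_eq_iff vraw_eq_Sum_any pivot_term_def zero_fun_def)

lemma vraw_add:
  assumes "finitary g" "finitary h"
  shows "vraw n (g + h) = vraw n g + vraw n (h :: 'k grass)"
proof (rule finitary_eqI)
  fix U :: "nat set" assume "finite U"
  then show "vraw n (g + h) U = (vraw n g + vraw n h) U"
    by (simp add: vraw_eq_sum[OF _ order_refl] sum.distrib[symmetric])
      (rule sum.cong, auto simp: pivot_term_def)
qed (use assms in \<open>simp_all add: finitary_vraw finitary_add\<close>)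

lemma vraw_scale:
  assumes "finitary g"
  shows "vraw n (\<lambda>S. c * g S) = (\<lambda>S. c * vraw n (g :: 'k grass) S)"
proof (rule finitary_eqI)
  fix U :: "nat set" assume "finite U"
  then show "vraw n (\<lambda>S. c * g S) U = c * vraw n g U"
    by (simp add: vraw_eq_sum[OF _ order_refl] sum_distrib_left)
      (rule sum.cong, auto simp: pivot_term_def)
qed (use assms finitary_vraw in \<open>auto simp: finitary_def\<close>)

lemma vraw_rec:
  assumes "finitary f"
  shows "vraw n (f :: 'k grass) = dop n f + mul_mono {n, n + 1} (vraw (n + 3) f)"
proof (rule finitary_eqI)
  fix U :: "nat set" assume U: "finite U"
  define N where "N = card U"
  have "vraw n f U = (\<Sum>k\<le>Suc N. pivot_term n k f U)"
    by (rule vraw_eq_sum[OF U]) (simp add: N_def)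
  also have "\<dots> = pivot_term n 0 f U + (\<Sum>k\<le>N. pivot_term n (Suc k) f U)"
    by (simp only: sum.atMost_Suc_shift)
  also have "pivot_term n 0 f U = dop n f U"
    by (simp add: pivot_term_def dop_char2)
  also have "(\<Sum>k\<le>N. pivot_term n (Suc k) f U) = mul_mono {n, n + 1} (vraw (n + 3) f) U"
  proof (cases "{n, n + 1} \<subseteq> U")
    case True
    have "card (U - {n, n + 1}) \<le> N" using U N_def by (simp add: card_mono)
    with U True show ?thesis
      by (simp add: pivot_term_Suc mul_mono_def vraw_eq_sum)
  qed (simp only: pivot_term_Suc mul_mono_def if_False sum.neutral_const)
  finally show "vraw n f U = (dop n f + mul_mono {n, n + 1} (vraw (n + 3) f)) U"
    by simp
qed (use assms in \<open>simp_all add: finitary_add finitary_dop finitary_mul_mono finitary_vraw\<close>)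

lemma dop_dop: "dop a (dop a (f :: 'k grass)) = 0"
  by (simp add: dop_char2 fun_eq_iff)

lemma dop_vraw:
  assumes "a < b" "finitary f"
  shows "dop a (vraw b f) = vraw b (dop a (f :: 'k grass))"
proof (rule finitary_eqI)
  fix U :: "nat set" assume U: "finite U"
  define N where "N = Suc (card U)"
  have N: "card (insert a U) \<le> N" "card U \<le> N"
    using U by (simp_all add: N_def card_insert_if)
  have "a \<notin> blocks b k" "a \<noteq> b + 3*k" for k
    using assms(1) blocks_bounds by fastforce+
  then have shifted:
    "(if a \<notin> U then pivot_term b k f (insert a U) else 0) = pivot_term b k (dop a f) U" for k
    by (auto simp: pivot_term_def dop_char2 insert_Diff_if insert_commute)
  have "dop a (vraw b f) U = (if a \<notin> U then (\<Sum>k\<le>N. pivot_term b k f (insert a U)) else 0)"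
    using vraw_eq_sum[of "insert a U" N b f] U N(1) by (simp add: dop_char2)
  also have "\<dots> = (\<Sum>k\<le>N. pivot_term b k (dop a f) U)"
    by (simp add: shifted[symmetric])
  also have "\<dots> = vraw b (dop a f) U"
    using U N by (simp add: vraw_eq_sum)
  finally show "dop a (vraw b f) U = vraw b (dop a f) U" .
qed (use assms in \<open>simp_all add: finitary_dop finitary_vraw\<close>)

lemma vraw_mul_mono:
  assumes T: "finite T" and f: "finitary f"
  shows "vraw b (mul_mono T f) = mul_mono T (vraw b f)
    + (\<Sum>k\<in>hit_indices b T. mul_mono (hit_mono b T k) (f :: 'k grass))"
proof (rule finitary_eqI)
  fix U :: "nat set" assume U: "finite U"
  define N where "N = card U"
  define R where "R k = mul_mono (hit_mono b T k) f U" for k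
  have "R k = 0" if "N < k" for k
    using that card_mono[OF U, of "blocks b k"] card_blocks[of b k]
    by (auto simp: R_def mul_mono_def N_def hit_mono_def)
  then have hits: "(\<Sum>k\<le>N. if k \<in> hit_indices b T then R k else 0) = (\<Sum>k\<in>hit_indices b T. R k)"
    by (simp add: sum.inter_restrict[symmetric])
      (rule sum.mono_neutral_left; use finite_hit_indices[OF T] not_le in blast)
  have "vraw b (mul_mono T f) U = (\<Sum>k\<le>N. pivot_term b k (mul_mono T f) U)"
    by (rule vraw_eq_sum[OF U]) (simp add: N_def)
  also have "\<dots> = (\<Sum>k\<le>N. mul_mono T (pivot_term b k f) U)
      + (\<Sum>k\<le>N. if k \<in> hit_indices b T then R k else 0)"
    unfolding R_def by (simp add: pivot_term_mul_mono sum.distrib)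
  also have "(\<Sum>k\<le>N. mul_mono T (pivot_term b k f) U) = mul_mono T (vraw b f) U"
    using U vraw_eq_sum[of "U - T" N b f] by (simp add: mul_mono_def N_def card_mono)
  finally show "vraw b (mul_mono T f) U = (mul_mono T (vraw b f)
      + (\<Sum>k\<in>hit_indices b T. mul_mono (hit_mono b T k) f)) U"
    using hits unfolding R_def by (simp add: sum_apply)
qed (use T f in \<open>auto intro!: finitary_add finitary_mul_mono finitary_vraw finitary_sum\<close>)

section \<open>Brackets of pivots and of monomial multiples of pivots\<close>

lemma pivot_anticomm_self: "pivot_anticomm a a (f :: 'k grass) = 0"
  by (simp add: pivot_anticomm_def grass_add_self_char2)

lemma pivot_anticomm_step:
  assumes ab: "a < b" and f: "finitary f"
  shows "pivot_anticomm a b (f :: 'k grass) = mul_mono {a, a + 1} (pivot_anticomm (a + 3) b f)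
    + (if b = a + 1 then mul_mono {a} (vraw (a + 3) f) else 0)"
proof -
  define X where "X = {a, a + 1}"
  define g where "g = vraw (a + 3) f"
  define L where "L = (if b = a + 1 then mul_mono {a} g else 0)"
  have g: "finitary g" using f by (simp add: g_def finitary_vraw)
  have "vraw b (vraw a f) = vraw b (dop a f + mul_mono X g)"
    using f by (simp add: vraw_rec[of f a] X_def g_def)
  also have "\<dots> = vraw b (dop a f) + vraw b (mul_mono X g)"
    using f g by (simp add: vraw_add finitary_dop finitary_mul_mono X_def)
  also have "vraw b (dop a f) = dop a (vraw b f)"
    using dop_vraw[OF ab f] ..
  also have "vraw b (mul_mono X g) = mul_mono X (vraw b g)
      + (\<Sum>k\<in>hit_indices b X. mul_mono (hit_mono b X k) g)"
    using g by (simp add: vraw_mul_mono X_def)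
  also have "(\<Sum>k\<in>hit_indices b X. mul_mono (hit_mono b X k) g) = L"
    using hit_indices_pair[OF ab] by (auto simp: X_def L_def hit_mono_def insert_Diff_if)
  finally have "vraw b (vraw a f) = dop a (vraw b f) + (mul_mono X (vraw b g) + L)" .
  moreover have "vraw a (vraw b f) = dop a (vraw b f) + mul_mono X (vraw (a + 3) (vraw b f))"
    using f by (simp add: vraw_rec[of "vraw b f" a] X_def finitary_vraw)
  ultimately have "pivot_anticomm a b f = (dop a (vraw b f) + dop a (vraw b f))
      + mul_mono X (pivot_anticomm (a + 3) b f) + L"
    by (simp add: pivot_anticomm_def g_def mul_mono_add add_ac)
  then show ?thesis
    by (simp add: grass_add_self_char2 X_def L_def g_def)
qed

lemma pivot_anticomm_Suc:
  assumes f: "finitary f"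
  shows "pivot_anticomm a (a + 1) (f :: 'k grass) = mul_mono {a} (vraw (a + 3) f)"
proof -
  have "pivot_anticomm (a + 3) (a + 1) f
      = mul_mono {a + 1, a + 1 + 1} (pivot_anticomm (a + 1 + 3) (a + 3) f)"
    using pivot_anticomm_step[of "a + 1" "a + 3", OF _ f] by (simp add: pivot_anticomm_sym)
  then have "mul_mono {a, a + 1} (pivot_anticomm (a + 3) (a + 1) f) = 0"
    by (simp add: mul_mono_mul_mono)
  with pivot_anticomm_step[of a "a + 1", OF _ f] show ?thesis by simp
qed

lemma pivot_anticomm_Suc_Suc:
  assumes f: "finitary f"
  shows "pivot_anticomm a (a + 2) (f :: 'k grass) = mul_mono {a, a + 1, a + 2} (vraw (a + 5) f)"
proof -
  have "pivot_anticomm a (a + 2) f = mul_mono {a, a + 1} (pivot_anticomm (a + 2) (a + 3) f)"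
    using pivot_anticomm_step[of a "a + 2", OF _ f] by (simp add: pivot_anticomm_sym)
  also have "pivot_anticomm (a + 2) (a + 3) f = mul_mono {a + 2} (vraw (a + 5) f)"
    using pivot_anticomm_Suc[OF f, of "a + 2"] by (simp add: numeral_eq_Suc)
  finally show ?thesis
    by (simp add: mul_mono_mul_mono insert_commute)
qed

lemma pivot_anticomm_eq:
  assumes "a \<le> b" and f: "finitary f"
  shows "pivot_anticomm a b (f :: 'k grass) =
    (if (b - a) mod 3 = 0 then 0 else mul_mono (comm_mono a b) (vraw (comm_pivot a b) f))"
  using assms(1)
proof (induction "(b - a) div 3" arbitrary: a)
  case 0
  then consider "b = a" | "b = a + 1" | "b = a + 2" by linarith
  then show ?case
  proof cases
    case 1
    then show ?thesis by (simp add: pivot_anticomm_self)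
  next
    case 2
    then show ?thesis
      using pivot_anticomm_Suc[OF f, of a] comm_mono_Suc[of a] comm_pivot_Suc[of a] by simp
  next
    case 3
    then show ?thesis
      using pivot_anticomm_Suc_Suc[OF f, of a] comm_mono_Suc_Suc[of a] comm_pivot_Suc_Suc[of a]
      by simp
  qed
next
  case (Suc q)
  then have ab: "a + 3 \<le> b" and q: "q = (b - (a + 3)) div 3" by simp_all
  have "(b - a) mod 3 = (b - (a + 3)) mod 3"
    using ab le_Suc_ex[OF ab] by auto
  moreover have "{a, a + 1} \<inter> comm_mono (a + 3) b = {}"
    using comm_mono_lower by fastforce
  moreover have "pivot_anticomm a b f = mul_mono {a, a + 1} (pivot_anticomm (a + 3) b f)"
    using pivot_anticomm_step[OF _ f, of a b] ab by simp
  ultimately show ?case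
    using Suc.hyps(1)[OF q] ab
    by (simp add: mul_mono_mul_mono comm_mono_step comm_pivot_step)
qed

lemma vraw_vraw_self:
  assumes f: "finitary f"
  shows "vraw a (vraw a (f :: 'k grass)) = mul_mono {a + 1} (vraw (a + 3) f)"
proof -
  define X where "X = {a, a + 1}"
  define g where "g = vraw (a + 3) f"
  define h where "h = mul_mono X (vraw (a + 3) (dop a f))"
  have g: "finitary g" using f by (simp add: g_def finitary_vraw)
  have "vraw a (vraw a f) = vraw a (dop a f + mul_mono X g)"
    using f by (simp add: vraw_rec[of f a] X_def g_def)
  also have "\<dots> = vraw a (dop a f) + vraw a (mul_mono X g)"
    using f g by (simp add: vraw_add finitary_dop finitary_mul_mono X_def)
  also have "vraw a (dop a f) = h"
    using f by (simp add: vraw_rec[of "dop a f" a] finitary_dop dop_dop h_def X_def)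
  also have "vraw a (mul_mono X g) = mul_mono X (vraw a g) + mul_mono {a + 1} g"
    using g by (simp add: vraw_mul_mono X_def hit_indices_member hit_mono_def insert_Diff_if)
  also have "mul_mono X (vraw a g) = mul_mono X (dop a g)"
    using g by (simp add: vraw_rec[of g a] mul_mono_add mul_mono_mul_mono X_def)
  also have "\<dots> = h"
    using dop_vraw[OF _ f, of a "a + 3"] by (simp add: g_def h_def)
  finally have "vraw a (vraw a f) = h + (h + mul_mono {a + 1} g)" .
  then show ?thesis
    by (simp only: add.assoc[symmetric] grass_add_self_char2 add_0_left g_def)
qed

lemma mono_pivot_Lam: "finite T \<Longrightarrow> f \<in> Lam \<Longrightarrow> (mono_pivot T n :: 'k op) f \<in> Lam"
  by (simp add: mono_pivot_apply mul_mono_Lam vraw_Lam)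

lemma anticomm_mul_mono_vraw:
  assumes A: "finite A" and B: "finite B" and ab: "a \<le> b" and Ab: "\<forall>i\<in>A. i < b"
    and f: "finitary f"
  shows "mul_mono A (vraw a (mul_mono B (vraw b f))) + mul_mono B (vraw b (mul_mono A (vraw a f)))
    = (if A \<inter> B = {} \<and> (b - a) mod 3 \<noteq> 0 \<and> (A \<union> B) \<inter> comm_mono a b = {}
       then mul_mono (A \<union> B \<union> comm_mono a b) (vraw (comm_pivot a b) (f :: 'k grass)) else 0)
      + (\<Sum>k\<in>hit_indices a B.
          if A \<inter> hit_mono a B k = {} then mul_mono (A \<union> hit_mono a B k) (vraw b f) else 0)"
proof -
  have "mul_mono A (vraw a (mul_mono B (vraw b f))) = mul_mono A (mul_mono B (vraw a (vraw b f)))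
      + (\<Sum>k\<in>hit_indices a B.
          if A \<inter> hit_mono a B k = {} then mul_mono (A \<union> hit_mono a B k) (vraw b f) else 0)"
    using f
    by (simp add: vraw_mul_mono[OF B] finitary_vraw mul_mono_add mul_mono_sum mul_mono_mul_mono)
  moreover have
    "mul_mono B (vraw b (mul_mono A (vraw a f))) = mul_mono B (mul_mono A (vraw b (vraw a f)))"
    using f by (simp add: vraw_mul_mono[OF A] finitary_vraw hit_indices_below[OF Ab])
  moreover have
    "mul_mono A (mul_mono B (vraw a (vraw b f))) + mul_mono B (mul_mono A (vraw b (vraw a f)))
      = (if A \<inter> B = {} then mul_mono (A \<union> B) (pivot_anticomm a b f) else 0)"
    by (simp add: mul_mono_mul_mono pivot_anticomm_def mul_mono_add Int_commute Un_commute)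
  moreover have "(if A \<inter> B = {} then mul_mono (A \<union> B) (pivot_anticomm a b f) else 0)
      = (if A \<inter> B = {} \<and> (b - a) mod 3 \<noteq> 0 \<and> (A \<union> B) \<inter> comm_mono a b = {}
         then mul_mono (A \<union> B \<union> comm_mono a b) (vraw (comm_pivot a b) f) else 0)"
    by (simp add: pivot_anticomm_eq[OF ab f] mul_mono_mul_mono Int_commute)
  ultimately show ?thesis
    by (simp add: add_ac)
qed

lemma brk_mono_pivot_eq_restr:
  assumes "finite A" "finite B"
  shows "brk (mono_pivot A a) (mono_pivot B b) = (restr (\<lambda>f.
    mul_mono A (vraw a (mul_mono B (vraw b f))) + mul_mono B (vraw b (mul_mono A (vraw a f))))
      :: 'k op)"
proof
  fix f :: "'k grass"
  show "brk (mono_pivot A a) (mono_pivot B b) f = restr (\<lambda>f.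
    mul_mono A (vraw a (mul_mono B (vraw b f))) + mul_mono B (vraw b (mul_mono A (vraw a f)))) f"
    using assms mono_pivot_Lam[of B f b] mono_pivot_Lam[of A f a]
    by (cases "f \<in> Lam")
      (simp_all add: brk_def restr_def mono_pivot_apply mono_pivot_notin_Lam grass_diff_char2)
qed

lemma brk_mono_pivot:
  assumes A: "finite A" and B: "finite B" and ab: "a \<le> b" and Ab: "\<forall>i\<in>A. i < b"
  shows "brk (mono_pivot A a) (mono_pivot B b :: 'k op) =
    (if A \<inter> B = {} \<and> (b - a) mod 3 \<noteq> 0 \<and> (A \<union> B) \<inter> comm_mono a b = {}
     then mono_pivot (A \<union> B \<union> comm_mono a b) (comm_pivot a b) else 0)
    + (\<Sum>k\<in>hit_indices a B.
        if A \<inter> hit_mono a B k = {} then mono_pivot (A \<union> hit_mono a B k) b else 0)"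
proof -
  define C where "C \<longleftrightarrow> A \<inter> B = {} \<and> (b - a) mod 3 \<noteq> 0 \<and> (A \<union> B) \<inter> comm_mono a b = {}"
  define c where "c k \<longleftrightarrow> A \<inter> hit_mono a B k = {}" for k
  define R :: "'k op"
    where "R = (if C then mul_mono (A \<union> B \<union> comm_mono a b) \<circ> vraw (comm_pivot a b) else 0)
    + (\<Sum>k\<in>hit_indices a B. if c k then mul_mono (A \<union> hit_mono a B k) \<circ> vraw b else 0)"
  have "brk (mono_pivot A a) (mono_pivot B b) = restr R"
    unfolding brk_mono_pivot_eq_restr[OF A B]
  proof (rule restr_cong)
    fix f :: "'k grass" assume "f \<in> Lam"
    then show "mul_mono A (vraw a (mul_mono B (vraw b f)))
        + mul_mono B (vraw b (mul_mono A (vraw a f))) = R f"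
      using anticomm_mul_mono_vraw[OF A B ab Ab Lam_finitary]
      by (simp add: R_def C_def c_def sum_apply if_distrib[of "\<lambda>X. X f"] cong: if_cong)
  qed
  also have "restr R = (if C then mono_pivot (A \<union> B \<union> comm_mono a b) (comm_pivot a b) else 0)
      + (\<Sum>k\<in>hit_indices a B. if c k then mono_pivot (A \<union> hit_mono a B k) b else 0)"
    unfolding mono_pivot_def
    by (simp add: R_def restr_add restr_sum if_distrib[of restr] cong: if_cong)
  finally show ?thesis by (simp add: C_def c_def)
qed

lemma brk_pivot_mono_pivot:
  assumes "finite B" "a < b" "\<forall>k. a + 3*k \<notin> B" "(b - a) mod 3 \<noteq> 0" "B \<inter> comm_mono a b = {}"
  shows "brk (mono_pivot {} a) (mono_pivot B b :: 'k op)
    = mono_pivot (B \<union> comm_mono a b) (comm_pivot a b)"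
proof -
  have "hit_indices a B = {}" using assms(3) by (simp add: hit_indices_def)
  with assms show ?thesis by (simp add: brk_mono_pivot)
qed

lemma brk_pivot_mono_pivot_member:
  assumes R: "std_index R n" and j: "j \<in> R"
  shows "brk (mono_pivot {} j) (mono_pivot R n :: 'k op) = mono_pivot (R - {j}) n"
proof -
  have jn: "j + 3 \<le> n" using std_index_bound[OF R j] .
  then have "j \<in> comm_mono j n" by (rule comm_mono_self)
  with j have "R \<inter> comm_mono j n \<noteq> {}" by blast
  moreover have "hit_mono j R 0 = R - {j}" by (simp add: hit_mono_def)
  ultimately show ?thesis
    using j jn by (simp add: brk_mono_pivot std_index_finite[OF R] hit_indices_member)
qed

section \<open>The Lie algebra spanned by the standard monomials\<close>

lemma std1_char2: "(std1 :: 'k op set) = {mono_pivot T n | T n. std_index T n}"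
proof -
  have "restr (monop T \<circ> vraw n) = (mono_pivot T n :: 'k op)" if "std_index T n" for T n
    using std_index_finite[OF that] by (simp add: monop_char2 mono_pivot_def)
  then show ?thesis
    unfolding std1_def std_index_def[symmetric] by (smt (verit) Collect_cong)
qed

lemma lin_op_mono_pivot:
  assumes "finite T"
  shows "lin_op (mono_pivot T n :: 'k op)"
  unfolding lin_op_def
proof (intro conjI allI ballI impI)
  fix f g :: "'k grass" and c :: 'k
  assume "f \<in> Lam"
  then show "mono_pivot T n f \<in> Lam" by (rule mono_pivot_Lam[OF assms])
  show "mono_pivot T n (\<lambda>S. c * f S) = (\<lambda>S. c * mono_pivot T n f S)"
    using \<open>f \<in> Lam\<close>
    by (simp add: mono_pivot_apply Lam_scale Lam_finitary vraw_scale mul_mono_def fun_eq_iff)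
  assume "g \<in> Lam"
  then show "mono_pivot T n (f + g) = mono_pivot T n f + mono_pivot T n g"
    using \<open>f \<in> Lam\<close> by (simp add: mono_pivot_apply Lam_add Lam_finitary vraw_add mul_mono_add)
qed (rule mono_pivot_notin_Lam)

lemma brk_std_mono_le:
  assumes A: "std_index A a" and B: "std_index B b" and ab: "a \<le> b"
  shows "brk (mono_pivot A a) (mono_pivot B b) \<in> ops.span (std1 :: 'k op set)"
proof -
  have Ab: "\<forall>i\<in>A. i < b" using std_index_bound[OF A] ab by fastforce
  have mem: "mono_pivot T n \<in> ops.span (std1 :: 'k op set)" if "std_index T n" for T n
    using that by (auto simp: std1_char2 intro: ops.span_base)
  show ?thesis
    unfolding brk_mono_pivot[OF std_index_finite[OF A] std_index_finite[OF B] ab Ab]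
  proof (intro ops.span_add ops.span_sum)
    show "(if A \<inter> B = {} \<and> (b - a) mod 3 \<noteq> 0 \<and> (A \<union> B) \<inter> comm_mono a b = {}
        then mono_pivot (A \<union> B \<union> comm_mono a b) (comm_pivot a b) else 0)
      \<in> ops.span (std1 :: 'k op set)"
      using std_index_comm_mono[OF A B ab] by (auto intro!: mem simp: ops.span_zero)
    fix k assume "k \<in> hit_indices a B"
    then show "(if A \<inter> hit_mono a B k = {} then mono_pivot (A \<union> hit_mono a B k) b else 0)
        \<in> ops.span (std1 :: 'k op set)"
      using std_index_hit_mono[OF A B ab] by (auto intro!: mem simp: hit_indices_def ops.span_zero)
  qed
qed

lemma lie_closed_span_std1: "lie_closed (ops.span (std1 :: 'k op set))"
proof (rule lie_closed_span)
  fix x y :: "'k op" assume "x \<in> std1" "y \<in> std1"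
  then obtain A a B b where A: "std_index A a" "x = mono_pivot A a"
    and B: "std_index B b" "y = mono_pivot B b"
    by (auto simp: std1_char2)
  show "brk x y \<in> ops.span std1"
  proof (cases "a \<le> b")
    case True
    then show ?thesis using brk_std_mono_le A B by simp
  next
    case False
    then have "- brk y x \<in> ops.span std1"
      using brk_std_mono_le[OF B(1) A(1)] A B by (simp add: ops.span_neg)
    then show ?thesis by (simp add: brk_antisym[of x y])
  qed
qed (auto simp: std1_char2 intro: lin_op_mono_pivot std_index_finite)

lemma brk_span_std1:
  "x \<in> ops.span std1 \<Longrightarrow> y \<in> ops.span std1 \<Longrightarrow> brk x y \<in> ops.span (std1 :: 'k op set)"
  using lie_closed_span_std1 by (simp add: lie_closed_def)

lemma mono_pivot_removal:
  assumes L: "\<forall>x\<in>L. \<forall>y\<in>L. brk x y \<in> L" and v: "\<And>j. j < n \<Longrightarrow> mono_pivot {} j \<in> L"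
    and R: "std_index R n" "mono_pivot R n \<in> L" and T: "T \<subseteq> R"
  shows "mono_pivot T n \<in> (L :: 'k op set)"
proof -
  have "mono_pivot (R - D) n \<in> L" if "finite D" "D \<subseteq> R" for D
    using that
  proof (induction D rule: finite_induct)
    case (insert x D)
    have RD: "std_index (R - D) n" "x \<in> R - D"
      using std_index_subset[OF R(1)] insert by auto
    then have "brk (mono_pivot {} x) (mono_pivot (R - D) n) \<in> L"
      using L v[of x] insert std_index_bound[OF RD] by auto
    moreover have "R - D - {x} = R - insert x D" by auto
    ultimately show ?case
      using brk_pivot_mono_pivot_member[OF RD] by simp
  qed (use R in simp)
  from this[of "R - T"] show ?thesis
    using std_index_finite[OF R(1)] T by (simp add: Diff_Diff_Int inf_absorb2)
qed

lemma brk_pivot_initial_segment: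
  "brk (mono_pivot {} a) (mono_pivot {..<a} (a + 2)) = (mono_pivot {..<a + 3} (a + 5) :: 'k op)"
proof -
  have "brk (mono_pivot {} a) (mono_pivot {..<a} (a + 2))
      = (mono_pivot ({..<a} \<union> comm_mono a (a + 2)) (comm_pivot a (a + 2)) :: 'k op)"
    by (rule brk_pivot_mono_pivot) (use comm_mono_Suc_Suc[of a] in auto)
  moreover have "{..<a} \<union> {a, a + 1, a + 2} = {..<a + 3}" by auto
  ultimately show ?thesis by (simp only: comm_mono_Suc_Suc comm_pivot_Suc_Suc)
qed

lemma brk_pivot0_pivot1: "brk (mono_pivot {} 0) (mono_pivot {} 1) = (mono_pivot {0} 3 :: 'k op)"
proof -
  have cm: "{} \<union> comm_mono 0 1 = {0}" "comm_pivot 0 1 = 3"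
    by (simp_all add: comm_mono_def comm_pivot_def)
  have "brk (mono_pivot {} 0) (mono_pivot {} 1)
      = (mono_pivot ({} \<union> comm_mono 0 1) (comm_pivot 0 1) :: 'k op)"
    by (rule brk_pivot_mono_pivot) (simp_all add: comm_mono_def)
  then show ?thesis unfolding cm .
qed

lemma brk_pivot1_pivot2: "brk (mono_pivot {} 1) (mono_pivot {} 2) = (mono_pivot {1} 4 :: 'k op)"
proof -
  have cm: "{} \<union> comm_mono 1 2 = {1}" "comm_pivot 1 2 = 4"
    by (simp_all add: comm_mono_def comm_pivot_def)
  have "brk (mono_pivot {} 1) (mono_pivot {} 2)
      = (mono_pivot ({} \<union> comm_mono 1 2) (comm_pivot 1 2) :: 'k op)"
    by (rule brk_pivot_mono_pivot) (simp_all add: comm_mono_def)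
  then show ?thesis unfolding cm .
qed

lemma brk_pivot2_x1v4:
  "brk (mono_pivot {} 2) (mono_pivot {1} 4) = (mono_pivot {1, 2, 3, 4} 7 :: 'k op)"
proof -
  have cm: "{1} \<union> comm_mono 2 4 = {1, 2, 3, 4}" "comm_pivot 2 4 = 7"
    using comm_mono_Suc_Suc[of 2] comm_pivot_Suc_Suc[of 2] by (simp_all add: insert_commute)
  have "brk (mono_pivot {} 2) (mono_pivot {1} 4)
      = (mono_pivot ({1} \<union> comm_mono 2 4) (comm_pivot 2 4) :: 'k op)"
    by (rule brk_pivot_mono_pivot) (simp_all add: comm_mono_def)
  then show ?thesis unfolding cm .
qed

lemma brk_pivot1_x0v5:
  "brk (mono_pivot {} 1) (mono_pivot {0} 5) = (mono_pivot {0, 1, 2, 4} 7 :: 'k op)"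
proof -
  have cm: "{0} \<union> comm_mono 1 5 = {0, 1, 2, 4}" "comm_pivot 1 5 = 7"
    using comm_mono_step[of 1 5] comm_mono_Suc[of 4] comm_pivot_step[of 1 5] comm_pivot_Suc[of 4]
    by (simp_all add: numeral_2_eq_2 insert_commute)
  have "brk (mono_pivot {} 1) (mono_pivot {0} 5)
      = (mono_pivot ({0} \<union> comm_mono 1 5) (comm_pivot 1 5) :: 'k op)"
    by (rule brk_pivot_mono_pivot) (use comm_mono_step[of 1 5] comm_mono_Suc[of 4] in simp_all)
  then show ?thesis unfolding cm .
qed

lemma brk_pivot2_x014v7:
  "brk (mono_pivot {} 2) (mono_pivot {0, 1, 4} 7)
    = (mono_pivot {0, 1, 2, 3, 4, 5, 6, 7} 10 :: 'k op)"
proof -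
  have comm: "comm_mono 2 7 = {2, 3, 5, 6, 7}"
    by (simp add: comm_mono_def blocks_Suc insert_commute)
  have cm: "{0, 1, 4} \<union> comm_mono 2 7 = {0, 1, 2, 3, 4, 5, 6, 7}" "comm_pivot 2 7 = 10"
    by (simp_all add: comm insert_commute comm_pivot_def)
  have "brk (mono_pivot {} 2) (mono_pivot {0, 1, 4} 7)
      = (mono_pivot ({0, 1, 4} \<union> comm_mono 2 7) (comm_pivot 2 7) :: 'k op)"
    by (rule brk_pivot_mono_pivot) (simp_all add: comm, presburger)
  then show ?thesis unfolding cm .
qed

text \<open>The largest standard monomial with pivot v_n is in general [v_(n-5), x_{..<n-5} v_(n-3)];
  for n = 10 the set {..<5} is not a standard index set for the pivot v_7, and
  [v_2, x_0 x_1 x_4 v_7] is used instead.\<close>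

lemma top_mono_pivot_in:
  assumes L: "\<forall>x\<in>L. \<forall>y\<in>L. brk x y \<in> L" and v: "\<And>j. j < 3 \<Longrightarrow> mono_pivot {} j \<in> L"
    and IH: "\<And>T m. m < n \<Longrightarrow> std_index T m \<Longrightarrow> mono_pivot T m \<in> L"
    and n: "n \<noteq> 4" "n \<noteq> 7"
  shows "mono_pivot {i. i + 3 \<le> n} n \<in> (L :: 'k op set)"
proof -
  have brk: "brk x y \<in> L" if "x \<in> L" "y \<in> L" for x y using L that by blast
  have v012: "mono_pivot {} 0 \<in> L" "mono_pivot {} 1 \<in> L" "mono_pivot {} 2 \<in> L"
    using v by simp_all
  consider "n \<le> 2" | "n = 3" | "n = 10" | "5 \<le> n" "n \<noteq> 10" using n by linarith
  then show ?thesis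
  proof cases
    case 1
    then have "{i. i + 3 \<le> n} = {}" by auto
    with 1 v show ?thesis by simp
  next
    case 2
    have "mono_pivot {0} 3 \<in> L"
      using brk[OF v012(1,2)] unfolding brk_pivot0_pivot1 .
    moreover have "{i. i + 3 \<le> n} = {0}" using 2 by auto
    ultimately show ?thesis using 2 by simp
  next
    case 3
    have "mono_pivot {0, 1, 4} 7 \<in> L"
      using IH[of 7 "{0, 1, 4}"] 3 by (simp add: std_index_def)
    then have "brk (mono_pivot {} 2) (mono_pivot {0, 1, 4} 7) \<in> L" by (rule brk[OF v012(3)])
    then have "mono_pivot {0, 1, 2, 3, 4, 5, 6, 7} 10 \<in> L" unfolding brk_pivot2_x014v7 .
    moreover have "{i. i + 3 \<le> n} = {0, 1, 2, 3, 4, 5, 6, 7}" using 3 by (auto simp: set_eq_iff)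
    ultimately show ?thesis using 3 by simp
  next
    case 4
    define a where "a = n - 5"
    have a: "n = a + 5" "a + 2 \<noteq> 4" "a + 2 \<noteq> 7" using 4 n by (auto simp: a_def)
    have "std_index {..<a} (a + 2)" using a by (auto simp: std_index_def)
    then have "mono_pivot {} a \<in> L" "mono_pivot {..<a} (a + 2) \<in> L"
      using IH[of a "{}"] IH[of "a + 2" "{..<a}"] a(1) by simp_all
    then have "mono_pivot {..<a + 3} (a + 5) \<in> L"
      using brk unfolding brk_pivot_initial_segment[symmetric] by blast
    moreover have "{i. i + 3 \<le> n} = {..<a + 3}" using a(1) by auto
    ultimately show ?thesis using a(1) by simp
  qed
qed

lemma std_mono_pivot_in:
  assumes L: "\<forall>x\<in>L. \<forall>y\<in>L. brk x y \<in> L" and v: "\<And>j. j < 3 \<Longrightarrow> mono_pivot {} j \<in> L"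
  shows "std_index T n \<Longrightarrow> mono_pivot T n \<in> (L :: 'k op set)"
proof (induction n arbitrary: T rule: less_induct)
  case (less n)
  have brk: "brk x y \<in> L" if "x \<in> L" "y \<in> L" for x y using L that by blast
  have v012: "mono_pivot {} 0 \<in> L" "mono_pivot {} 1 \<in> L" "mono_pivot {} 2 \<in> L"
    using v by simp_all
  have v': "mono_pivot {} j \<in> L" if "j < n" for j using less.IH[OF that, of "{}"] by simp
  have removal: "mono_pivot T n \<in> L" if "std_index R n" "mono_pivot R n \<in> L" "T \<subseteq> R" for R
    using mono_pivot_removal[OF L v' that] .
  from less.prems show ?case
  proof (cases rule: std_index_cases)
    case 1
    show ?thesis
    proof (rule removal)
      show "std_index {i. i + 3 \<le> n} n" using 1 by (simp add: std_index_def)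
    qed (use 1 top_mono_pivot_in[OF L v less.IH] in auto)
  next
    case 2
    have "mono_pivot {1} 4 \<in> L"
      using brk[OF v012(2,3)] unfolding brk_pivot1_pivot2 .
    with 2 show ?thesis
      by (intro removal[of "{1}"]) (simp_all add: std_index_def)
  next
    case 3
    have "mono_pivot {1} 4 \<in> L"
      using less.IH[of 4 "{1}"] 3 by (simp add: std_index_def)
    then have "brk (mono_pivot {} 2) (mono_pivot {1} 4) \<in> L" by (rule brk[OF v012(3)])
    then have "mono_pivot {1, 2, 3, 4} 7 \<in> L" unfolding brk_pivot2_x1v4 .
    with 3 show ?thesis
      by (intro removal[of "{1, 2, 3, 4}"]) (simp_all add: std_index_def)
  next
    case 4
    have "mono_pivot {0} 5 \<in> L"
      using less.IH[of 5 "{0}"] 4 by (simp add: std_index_def)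
    then have "brk (mono_pivot {} 1) (mono_pivot {0} 5) \<in> L" by (rule brk[OF v012(2)])
    then have "mono_pivot {0, 1, 2, 4} 7 \<in> L" unfolding brk_pivot1_x0v5 .
    with 4 show ?thesis
      by (intro removal[of "{0, 1, 2, 4}"]) (simp_all add: std_index_def)
  qed
qed

section \<open>Squares\<close>

lemma sq_mono_pivot_eq_restr:
  assumes "finite A"
  shows "sq (mono_pivot A a) = (restr (\<lambda>f. mul_mono A (vraw a (mul_mono A (vraw a f)))) :: 'k op)"
proof
  fix f :: "'k grass"
  show "sq (mono_pivot A a) f = restr (\<lambda>f. mul_mono A (vraw a (mul_mono A (vraw a f)))) f"
    using assms mono_pivot_Lam[of A f a]
    by (cases "f \<in> Lam")
      (simp_all add: sq_def restr_def mono_pivot_apply mono_pivot_notin_Lam vraw_zero)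
qed

lemma sq_pivot: "sq (mono_pivot {} m :: 'k op) = mono_pivot {m + 1} (m + 3)"
proof -
  have "sq (mono_pivot {} m :: 'k op) = restr (\<lambda>f. mul_mono {} (vraw m (mul_mono {} (vraw m f))))"
    by (rule sq_mono_pivot_eq_restr) simp
  also have "\<dots> = restr (mul_mono {m + 1} \<circ> vraw (m + 3))"
    by (rule restr_cong) (simp add: vraw_vraw_self Lam_finitary)
  finally show ?thesis by (simp only: mono_pivot_def)
qed

lemma sq_mono_pivot_nonempty:
  assumes "finite A" "A \<noteq> {}" "\<forall>i\<in>A. i < a"
  shows "sq (mono_pivot A a :: 'k op) = 0"
proof -
  have "mul_mono A (vraw a (mul_mono A (vraw a f))) = 0" if "f \<in> Lam" for f :: "'k grass"
    using assms that
    by (simp add: vraw_mul_mono finitary_vraw Lam_finitary hit_indices_below mul_mono_add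
        mul_mono_mul_mono)
  then show ?thesis
    unfolding sq_mono_pivot_eq_restr[OF assms(1)] by (simp add: restr_def fun_eq_iff)
qed

lemma brk_sq:
  assumes x: "lin_op x" and v: "lin_op v"
  shows "brk x (sq v) = brk (brk x v) (v :: 'k op)"
proof
  fix f :: "'k grass"
  show "brk x (sq v) f = brk (brk x v) v f"
  proof (cases "f \<in> Lam")
    case True
    then have l: "x (v f) \<in> Lam" "v (x f) \<in> Lam"
      using lin_opD(2)[OF x] lin_opD(2)[OF v] by simp_all
    have "brk (brk x v) v f = x (v (v f)) + v (v (x f)) + (v (x (v f)) + v (x (v f)))"
      by (simp add: brk_def grass_diff_char2 lin_opD(3)[OF v l] lin_opD(3)[OF v l(2,1)] add_ac)
    also have "\<dots> = brk x (sq v) f"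
      by (simp add: brk_def sq_def grass_diff_char2 grass_add_self_char2)
    finally show ?thesis ..
  next
    case False
    then show ?thesis
      using lin_opD(1)[OF x False] lin_opD(1)[OF v False]
        lin_op_zero_arg[OF x] lin_op_zero_arg[OF v]
      by (simp add: brk_def sq_def)
  qed
qed

lemma sq_add:
  assumes P: "lin_op P" and Q: "lin_op Q"
  shows "sq (P + Q) = sq P + sq Q + brk P (Q :: 'k op)"
proof
  fix f :: "'k grass"
  show "sq (P + Q) f = (sq P + sq Q + brk P Q) f"
  proof (cases "f \<in> Lam")
    case True
    then show ?thesis
      using lin_opD(3)[OF P, of "P f" "Q f"] lin_opD(3)[OF Q, of "P f" "Q f"]
        lin_opD(2)[OF P] lin_opD(2)[OF Q]
      by (simp add: sq_def brk_def grass_diff_char2 add_ac)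
  next
    case False
    then show ?thesis
      using lin_opD(1)[OF P False] lin_opD(1)[OF Q False]
        lin_op_zero_arg[OF P] lin_op_zero_arg[OF Q]
      by (simp add: sq_def brk_def)
  qed
qed

lemma span_sq:
  assumes B: "\<And>b. b \<in> B \<Longrightarrow> lin_op b" and lie: "lie_closed (ops.span B)"
    and sqB: "\<And>b. b \<in> B \<Longrightarrow> sq b \<in> ops.span B"
    and x: "x \<in> ops.span B"
  shows "sq x \<in> ops.span (B :: 'k op set)"
proof -
  from x have "x \<in> ops.span B \<and> sq x \<in> ops.span B"
  proof (induction rule: ops.span_induct_alt)
    case base
    have "sq (0 :: 'k op) = 0" by (simp add: sq_def fun_eq_iff)
    show ?case unfolding \<open>sq 0 = 0\<close> using ops.span_zero by blast
  next
    case (step c b y)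
    have b: "lin_op b" and y: "lin_op y" "y \<in> ops.span B"
      using B[OF step(1)] step(2) lin_op_span[OF B] by blast+
    have "scl c b + y \<in> ops.span B"
      using ops.span_base[OF step(1)] y(2) by (intro ops.span_add ops.span_scale)
    moreover have "sq (scl c b + y) = scl (c * c) (sq b) + sq y + brk (scl c b) y"
      by (simp only: sq_add[OF lin_op_scl[OF b] y(1)] sq_scl[OF b])
    moreover have "scl (c * c) (sq b) + sq y + brk (scl c b) y \<in> ops.span B"
      using lie sqB[OF step(1)] step(2) ops.span_scale[OF ops.span_base[OF step(1)]]
      by (intro ops.span_add ops.span_scale) (auto simp: lie_closed_def)
    ultimately show ?case by (simp add: plus_fun_def)
  qed
  then show ?thesis ..
qed

lemma sqpiv_char2: "(sqpiv :: 'k op set) = {mono_pivot {n - 2} n | n. 3 \<le> n}"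
  by (simp add: sqpiv_def mono_pivot_def xop_char2)

lemma sqpiv_eq_range_sq_pivot: "(sqpiv :: 'k op set) = range (\<lambda>m. sq (mono_pivot {} m))"
proof -
  have "{mono_pivot {n - 2} n | n. 3 \<le> n} = range (\<lambda>m. mono_pivot {m + 1} (m + 3) :: 'k op)"
  proof (intro set_eqI iffI)
    fix x :: "'k op" assume "x \<in> {mono_pivot {n - 2} n | n. 3 \<le> n}"
    then obtain n where "3 \<le> n" "x = mono_pivot {n - 2} n" by blast
    then show "x \<in> range (\<lambda>m. mono_pivot {m + 1} (m + 3))"
      by (intro image_eqI[of _ _ "n - 3"])
        (simp_all add: numeral_3_eq_3 numeral_2_eq_2 Suc_diff_Suc)
  next
    fix x :: "'k op" assume "x \<in> range (\<lambda>m. mono_pivot {m + 1} (m + 3))"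
    then obtain m where "x = mono_pivot {m + 1} (m + 3)" by blast
    then show "x \<in> {mono_pivot {n - 2} n | n. 3 \<le> n}"
      by (intro CollectI exI[of _ "m + 3"]) simp
  qed
  then show ?thesis by (simp add: sqpiv_char2 sq_pivot)
qed

lemma pivot_in_std1: "mono_pivot {} m \<in> (std1 :: 'k op set)"
  unfolding std1_char2 by (blast intro: std_index_empty)

lemma lin_op_std1_sqpiv: "x \<in> std1 \<union> sqpiv \<Longrightarrow> lin_op (x :: 'k op)"
  by (auto simp: std1_char2 sqpiv_char2 intro: lin_op_mono_pivot std_index_finite)

lemma brk_sq_pivot_span_std1:
  assumes z: "z \<in> ops.span (std1 :: 'k op set)"
  shows "brk z (sq (mono_pivot {} m)) \<in> ops.span std1"
    and "brk (sq (mono_pivot {} m)) z \<in> ops.span std1"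
proof -
  have "lin_op z" using lin_op_span[OF _ z] lin_op_std1_sqpiv by blast
  then have "brk z (sq (mono_pivot {} m)) = brk (brk z (mono_pivot {} m)) (mono_pivot {} m)"
    by (simp add: brk_sq lin_op_mono_pivot)
  then show *: "brk z (sq (mono_pivot {} m)) \<in> ops.span std1"
    using z pivot_in_std1 by (simp add: brk_span_std1 ops.span_base)
  show "brk (sq (mono_pivot {} m)) z \<in> ops.span std1"
    using ops.span_neg[OF *] by (simp add: brk_antisym[of "sq _"])
qed

lemma brk_std1_sqpiv:
  assumes "x \<in> std1 \<union> sqpiv" "y \<in> std1 \<union> sqpiv"
  shows "brk x y \<in> ops.span (std1 :: 'k op set)"
proof -
  consider "x \<in> std1" "y \<in> std1" | m where "x \<in> std1" "y = sq (mono_pivot {} m)"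
    | m where "x = sq (mono_pivot {} m)" "y \<in> std1"
    | k m where "x = sq (mono_pivot {} k)" "y = sq (mono_pivot {} m)"
    using assms by (auto simp: sqpiv_eq_range_sq_pivot)
  then show ?thesis
  proof cases
    case 4
    have "brk x (mono_pivot {} m) \<in> ops.span std1"
      using 4 brk_sq_pivot_span_std1(2) pivot_in_std1 by (simp add: ops.span_base)
    then have "brk (brk x (mono_pivot {} m)) (mono_pivot {} m) \<in> ops.span std1"
      using pivot_in_std1 by (simp add: brk_span_std1 ops.span_base)
    then show ?thesis
      using 4 by (simp add: brk_sq lin_op_sq lin_op_mono_pivot)
  qed (simp_all add: brk_span_std1 ops.span_base brk_sq_pivot_span_std1)
qed

lemma lie_closed_span_std1_sqpiv: "lie_closed (ops.span (std1 \<union> sqpiv :: 'k op set))"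
  using lin_op_std1_sqpiv brk_std1_sqpiv ops.span_mono[of std1 "std1 \<union> sqpiv"]
  by (intro lie_closed_span) auto

lemma sq_std1_sqpiv:
  assumes "b \<in> std1 \<union> sqpiv"
  shows "sq b \<in> ops.span (std1 \<union> sqpiv :: 'k op set)"
proof -
  obtain T n where b: "b = mono_pivot T n" "T = {} \<or> (finite T \<and> T \<noteq> {} \<and> (\<forall>i\<in>T. i < n))"
    using assms std_index_finite std_index_bound
    by (fastforce simp: std1_char2 sqpiv_char2)
  show ?thesis
  proof (cases "T = {}")
    case True
    then have "sq b \<in> sqpiv" using b by (simp add: sqpiv_eq_range_sq_pivot)
    then show ?thesis by (simp add: ops.span_base)
  next
    case False
    then show ?thesis using b by (simp add: sq_mono_pivot_nonempty ops.span_zero)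
  qed
qed

lemma sq_span_std1_sqpiv:
  "x \<in> ops.span (std1 \<union> sqpiv) \<Longrightarrow> sq x \<in> ops.span (std1 \<union> sqpiv :: 'k op set)"
  by (rule span_sq[OF lin_op_std1_sqpiv lie_closed_span_std1_sqpiv sq_std1_sqpiv])

lemma odd_op_pivot: "odd_op (mono_pivot {} n :: 'k op)"
  unfolding odd_op_def
proof (intro allI impI)
  fix b and f :: "'k grass"
  assume "homog b f"
  then have f: "f \<in> Lam" and par: "\<And>S. f S \<noteq> 0 \<Longrightarrow> odd (card S) = b"
    by (auto simp: homog_def)
  have "odd (card U) \<longleftrightarrow> \<not> b" if U: "vraw n f U \<noteq> 0" for U
  proof -
    have fin: "finite U"
      using U finitary_vraw[OF Lam_finitary[OF f]] by (auto simp: finitary_def)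
    obtain k where "pivot_term n k f U \<noteq> 0"
      using U by (auto simp: vraw_eq_Sum_any elim: Sum_any.not_neutral_obtains_not_neutral)
    then have P: "blocks n k \<subseteq> U" "n + 3*k \<notin> U" "f (insert (n + 3*k) (U - blocks n k)) \<noteq> 0"
      by (auto simp: pivot_term_def split: if_splits)
    have "card U = card (U - blocks n k) + 2 * k"
      using card_Diff_subset[OF finite_blocks P(1)] card_mono[OF fin P(1)] card_blocks[of n k]
      by simp
    moreover have "card (insert (n + 3*k) (U - blocks n k)) = card (U - blocks n k) + 1"
      using fin P(2) by simp
    ultimately show ?thesis using par[OF P(3)] by simp
  qed
  then show "homog (\<not> b) (mono_pivot {} n f)"
    using f vraw_Lam[OF f] by (auto simp: homog_def mono_pivot_apply)
qed

section \<open>Linear independence\<close>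

lemma vraw_xgen:
  "vraw m (xgen n :: 'k grass) W = (if \<exists>k. n = m + 3*k \<and> W = blocks m k then 1 else 0)"
proof (cases "\<exists>k. n = m + 3*k \<and> W = blocks m k")
  case True
  then obtain k where k: "n = m + 3*k" "W = blocks m k" by blast
  then have "{k'. pivot_term m k' (xgen n :: 'k grass) W \<noteq> 0} = {k}"
    by (auto simp: pivot_term_xgen)
  with k show ?thesis
    by (simp add: vraw_eq_Sum_any Sum_any.expand_set pivot_term_xgen)
next
  case False
  then have "pivot_term m k (xgen n :: 'k grass) W = 0" for k
    by (auto simp: pivot_term_xgen)
  with False show ?thesis by (simp add: vraw_eq_Sum_any)
qed

lemma mono_pivot_xgen:
  "mono_pivot T m (xgen n :: 'k grass) U =
    (if T \<subseteq> U \<and> (\<exists>k. n = m + 3*k \<and> U - T = blocks m k) then 1 else 0)"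
  by (simp add: mono_pivot_apply xgen_Lam mul_mono_def vraw_xgen)

lemma mono_pivot_xgen_basis_index:
  assumes "basis_index T' m" and T: "basis_index T n"
  shows "mono_pivot T' m (xgen n :: 'k grass) T = (if T' = T \<and> m = n then 1 else 0)"
proof -
  have "T' = T \<and> m = n" if "T' \<subseteq> T" "n = m + 3*k" "T - T' = blocks m k" for k
  proof (cases k)
    case 0
    then show ?thesis using that by auto
  next
    case (Suc k')
    \<comment> \<open>then T would contain n - 3 and n - 2, which no basis index allows\<close>
    then have "m + 3*k' \<in> T" "m + 3*k' + 1 \<in> T" "n = m + 3*k' + 3"
      using that by (auto simp: blocks_Suc)
    with T show ?thesis
      by (auto simp: basis_index_def dest: std_index_bound)
  qed
  then show ?thesis
    by (auto simp: mono_pivot_xgen)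
qed

lemma std1_sqpiv_basis_index:
  "x \<in> std1 \<union> sqpiv \<Longrightarrow> \<exists>T n. basis_index T n \<and> x = (mono_pivot T n :: 'k op)"
  by (auto simp: std1_char2 sqpiv_char2 basis_index_def)

lemma independent_std1_sqpiv: "\<not> ops.dependent (std1 \<union> sqpiv :: 'k op set)"
proof
  assume "ops.dependent (std1 \<union> sqpiv :: 'k op set)"
  then obtain t u x where t: "finite t" "t \<subseteq> (std1 \<union> sqpiv :: 'k op set)"
    and sum: "(\<Sum>v\<in>t. scl (u v) v) = 0"
    and x: "x \<in> t" "u x \<noteq> 0"
    unfolding ops.dependent_explicit by blast
  obtain T n where Tn: "basis_index T n" "x = mono_pivot T n"
    using std1_sqpiv_basis_index t(2) x(1) by blast
  have val: "v (xgen n) T = (if v = x then 1 else 0)" if vt: "v \<in> t" for v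
  proof -
    obtain T' m where v: "basis_index T' m" "v = mono_pivot T' m"
      using std1_sqpiv_basis_index t(2) vt by blast
    show ?thesis
    proof (cases "v = x")
      case True
      then show ?thesis using mono_pivot_xgen_basis_index[OF Tn(1) Tn(1)] Tn(2) by simp
    next
      case False
      then have "\<not> (T' = T \<and> m = n)" using v Tn by auto
      then show ?thesis using mono_pivot_xgen_basis_index[OF v(1) Tn(1)] v(2) False by simp
    qed
  qed
  have "0 = (\<Sum>v\<in>t. scl (u v) v) (xgen n) T" using sum by simp
  also have "\<dots> = (\<Sum>v\<in>t. u v * v (xgen n) T)" by (simp add: sum_apply scl_def)
  also have "\<dots> = (\<Sum>v\<in>t. if v = x then u v else 0)" by (rule sum.cong) (simp_all add: val)
  also have "\<dots> = u x" using t(1) x(1) by simp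
  finally show False using x(2) by simp
qed

section \<open>The generated algebras\<close>

lemma pivots_in_lie_closed:
  assumes "{pivot 0, pivot 1, pivot 2} \<subseteq> L" "j < 3"
  shows "mono_pivot {} j \<in> (L :: 'k op set)"
  using assms by (auto simp: pivot_eq_mono_pivot numeral_3_eq_3 numeral_2_eq_2 less_Suc_eq)

lemma std1_subset_lie_closed:
  assumes "lie_closed L" "{pivot 0, pivot 1, pivot 2} \<subseteq> L"
  shows "std1 \<subseteq> (L :: 'k op set)"
proof
  fix x :: "'k op" assume "x \<in> std1"
  then obtain T n where "std_index T n" "x = mono_pivot T n"
    by (auto simp: std1_char2)
  with assms show "x \<in> L"
    using std_mono_pivot_in[of L] pivots_in_lie_closed by (auto simp: lie_closed_def)
qed

lemma span_std1_sqpiv_subset: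
  assumes "lie_closed L" "{pivot 0, pivot 1, pivot 2} \<subseteq> L" "\<forall>A\<in>L. odd_op A \<longrightarrow> sq A \<in> L"
  shows "ops.span (std1 \<union> sqpiv) \<subseteq> (L :: 'k op set)"
proof (rule ops.span_minimal)
  show "std1 \<union> sqpiv \<subseteq> L"
    using std1_subset_lie_closed[OF assms(1,2)] pivot_in_std1 odd_op_pivot assms(3)
    by (auto simp: sqpiv_eq_range_sq_pivot)
qed (use assms(1) in \<open>simp add: lie_closed_def\<close>)

lemma pivots_in_span_std1: "{pivot 0, pivot 1, pivot 2} \<subseteq> ops.span (std1 :: 'k op set)"
  using pivot_in_std1 by (simp add: pivot_eq_mono_pivot ops.span_base)

lemma lie_gen_pivots: "lie_gen {pivot 0, pivot 1, pivot 2} = ops.span (std1 :: 'k op set)"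
  unfolding lie_gen_eq_hull
proof (rule hull_unique)
  show "{pivot 0, pivot 1, pivot 2} \<subseteq> ops.span (std1 :: 'k op set)"
    by (rule pivots_in_span_std1)
  show "lie_closed (ops.span (std1 :: 'k op set))"
    by (rule lie_closed_span_std1)
  fix L :: "'k op set"
  assume "{pivot 0, pivot 1, pivot 2} \<subseteq> L" "lie_closed L"
  then show "ops.span std1 \<subseteq> L"
    using std1_subset_lie_closed by (simp add: lie_closed_def ops.span_minimal)
qed

lemma slie_gen_pivots: "slie_gen {pivot 0, pivot 1, pivot 2} = ops.span (std1 \<union> sqpiv :: 'k op set)"
  unfolding slie_gen_eq_hull
  using pivots_in_span_std1 ops.span_mono[of std1 "std1 \<union> sqpiv"] lie_closed_span_std1_sqpiv
    sq_span_std1_sqpiv span_std1_sqpiv_subset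
  by (intro hull_unique) auto

lemma rlie_gen_pivots: "rlie_gen {pivot 0, pivot 1, pivot 2} = ops.span (std1 \<union> sqpiv :: 'k op set)"
  unfolding rlie_gen_eq_hull
  using pivots_in_span_std1 ops.span_mono[of std1 "std1 \<union> sqpiv"] lie_closed_span_std1_sqpiv
    sq_span_std1_sqpiv span_std1_sqpiv_subset
  by (intro hull_unique) auto

end

theorem corollary5p2:
  assumes "CHAR('k::field) = 2"
  shows "is_basis (std1 :: 'k op set) (lie_gen {pivot 0, pivot 1, pivot 2})
    \<and> is_basis (std1 \<union> sqpiv :: 'k op set) (slie_gen {pivot 0, pivot 1, pivot 2})
    \<and> is_basis (std1 \<union> sqpiv :: 'k op set) (rlie_gen {pivot 0, pivot 1, pivot 2})"
proof -
  have char2: "(1::'k) + 1 = 0"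
    using of_nat_CHAR[where 'a = 'k] assms by simp
  have "\<not> ops.dependent (std1 :: 'k op set)"
    using independent_std1_sqpiv[OF char2] ops.dependent_mono[of std1 "std1 \<union> sqpiv"] by blast
  with independent_std1_sqpiv[OF char2] show ?thesis
    unfolding is_basis_def
      lie_gen_pivots[OF char2] slie_gen_pivots[OF char2] rlie_gen_pivots[OF char2]
    by simp
qed

end
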